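(* Let $G=(V,E)$ be a hypergraph, $\{w_A\}_{A\in E}$ and $\lambda$ complex numbers, and $\mathcal{C}=\{C_\gamma\}$ a family of pairwise disjoint nonempty subsets of $V$. Then $$\int\mathcal{D}(\psi,\bar\psi)\Big(\prod_\gamma f_{C_\gamma}^{(\lambda)}\Big)\exp\Big[\lambda\sum_i\bar\psi_i\psi_i+\sum_{A\in E}w_Af_A^{(\lambda)}\Big]=\sum_{F\in\mathcal{F}(G;\mathcal{C})}\Big(\prod_{A\in F}w_A\Big)\lambda^{k(F)-\sum_\gamma(|C_\gamma|-1)},$$ where $\mathcal{F}(G;\mathcal{C})$ is the set of spanning hyperforests $F$ of $G$ that contain none of the $C_\gamma$ as hyperedges and such that $(V,F\cup\{C_\gamma\})$ is still a hyperforest (acyclic).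
   Context: A hypergraph is a pair $G=(V,E)$ with $V$ finite and $E$ a set of subsets of $V$ each of cardinality at least 2. Walks, connected components (isolated vertices included) and cycles (walks $(v_0,e_1,\ldots,e_k,v_k)$ with $v_{i-1},v_i\in e_i$, $v_0,\ldots,v_{k-1}$ distinct, $v_k=v_0$, distinct $e_i$, $k\ge2$) as usual; a hyperforest has no cycles. A spanning hyperforest is $F\subseteq E$ with $(V,F)$ a hyperforest; $k(F)$ is the number of components of $(V,F)$. Grassmann generators $\psi_i,\bar\psi_i$ ($i\in V$) over $\mathbb{C}$; $\tau_A=\prod_{i\in A}\bar\psi_i\psi_i$ ($\tau_\emptyset=1$); $f_A^{(\lambda)}=\lambda(1-|A|)\tau_A+\sum_{i\in A}\tau_{A\setminus\{i\}}-\sum_{i,j\in A,\ i\neq j}\bar\psi_i\psi_j\,\tau_{A\setminus\{i,j\}}$ (so $f_{\{i\}}^{(\lambda)}=1$); $\mathcal{D}(\psi,\bar\psi)=\prod_{i\in V}d\psi_i\,d\bar\psi_i$ with $\int d\psi_i\,d\bar\psi_i\,\bar\psi_i\psi_i=1$ and integrals of $1,\psi_i,\bar\psi_i$ equal to $0$. *)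

theory Defs
  imports Complex_Main "HOL-Library.Product_Lexorder"
begin

definition hypergraph :: "'v set \<Rightarrow> 'v set set \<Rightarrow> bool" where
  "hypergraph V E \<longleftrightarrow> finite V \<and> (\<forall>A\<in>E. A \<subseteq> V \<and> card A \<ge> 2)"

text \<open>A cycle: vertices vs 0 .. vs k, edges es 0 .. es (k-1) (es i plays the role of e_(i+1)),
  with vs i, vs (i+1) in es i, vs 0..vs (k-1) distinct, vs k = vs 0, distinct edges, k >= 2.\<close>
definition has_cycle :: "'v set set \<Rightarrow> bool" where
  "has_cycle F \<longleftrightarrow> (\<exists>(k::nat) (vs::nat \<Rightarrow> 'v) (es::nat \<Rightarrow> 'v set).
      k \<ge> 2 \<and> (\<forall>i<k. es i \<in> F \<and> vs i \<in> es i \<and> vs (Suc i) \<in> es i)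
      \<and> inj_on vs {..<k} \<and> vs k = vs 0 \<and> inj_on es {..<k})"

definition hyperforest :: "'v set \<Rightarrow> 'v set set \<Rightarrow> bool" where
  "hyperforest V F \<longleftrightarrow> \<not> has_cycle F"

definition adj_rel :: "'v set \<Rightarrow> 'v set set \<Rightarrow> ('v \<times> 'v) set" where
  "adj_rel V F = {(i, j). i \<in> V \<and> j \<in> V \<and> (\<exists>A\<in>F. i \<in> A \<and> j \<in> A)}"

definition ncomp :: "'v set \<Rightarrow> 'v set set \<Rightarrow> nat" where
  "ncomp V F = card (V // ((adj_rel V F)\<^sup>*))"

text \<open>Generators: (i,False) is psi_i, (i,True) is psibar_i. An element is a coefficient
  function on sets of generators; the set S stands for the product of its generators
  in increasing order (lexicographic order on 'v x bool).\<close>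
type_synonym 'v gr = "('v \<times> bool) set \<Rightarrow> complex"

definition gsign :: "('v::linorder \<times> bool) set \<Rightarrow> ('v \<times> bool) set \<Rightarrow> complex" where
  "gsign S T = (-1) ^ card {(s, t). s \<in> S \<and> t \<in> T \<and> t < s}"

definition gmul :: "'v::linorder gr \<Rightarrow> 'v gr \<Rightarrow> 'v gr" where
  "gmul f g = (\<lambda>U. \<Sum>S\<in>Pow U. gsign S (U - S) * f S * g (U - S))"

definition gadd :: "'v gr \<Rightarrow> 'v gr \<Rightarrow> 'v gr" where
  "gadd f g = (\<lambda>U. f U + g U)"

definition gsmult :: "complex \<Rightarrow> 'v gr \<Rightarrow> 'v gr" where
  "gsmult c f = (\<lambda>U. c * f U)"

definition gsum :: "('a \<Rightarrow> 'v gr) \<Rightarrow> 'a set \<Rightarrow> 'v gr" where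
  "gsum f I = (\<lambda>U. \<Sum>a\<in>I. f a U)"

definition gscalar :: "complex \<Rightarrow> 'v gr" where
  "gscalar c = (\<lambda>U. if U = {} then c else 0)"

definition gone :: "'v gr" where
  "gone = gscalar 1"

definition ggen :: "'v \<times> bool \<Rightarrow> 'v gr" where
  "ggen x = (\<lambda>U. if U = {x} then 1 else 0)"

definition psi :: "'v \<Rightarrow> 'v gr" where
  "psi i = ggen (i, False)"

definition psibar :: "'v \<Rightarrow> 'v gr" where
  "psibar i = ggen (i, True)"

definition glistprod :: "'v::linorder gr list \<Rightarrow> 'v gr" where
  "glistprod xs = foldr gmul xs gone"

primrec gpow :: "'v::linorder gr \<Rightarrow> nat \<Rightarrow> 'v gr" where
  "gpow f 0 = gone"
| "gpow f (Suc n) = gmul f (gpow f n)"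

text \<open>Exponential of an element of the Grassmann algebra on the generators of V.
  For elements with zero body (nilpotent) the series terminates after 2|V| terms.\<close>
definition gexp :: "'v::linorder set \<Rightarrow> 'v gr \<Rightarrow> 'v gr" where
  "gexp V f = gsum (\<lambda>n. gsmult (1 / of_nat (fact n)) (gpow f n)) {0..2 * card V}"

definition tau :: "'v::linorder set \<Rightarrow> 'v gr" where
  "tau A = glistprod (map (\<lambda>i. gmul (psibar i) (psi i)) (sorted_list_of_set A))"

definition fpoly :: "complex \<Rightarrow> 'v::linorder set \<Rightarrow> 'v gr" where
  "fpoly lam A =
     gadd (gadd (gsmult (lam * (1 - of_nat (card A))) (tau A))
                (gsum (\<lambda>i. tau (A - {i})) A))
          (gsmult (-1) (gsum (\<lambda>(i, j). gmul (gmul (psibar i) (psi j)) (tau (A - {i, j})))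
                          {(i, j). i \<in> A \<and> j \<in> A \<and> i \<noteq> j}))"

text \<open>Berezin integral with measure prod_i dpsi_i dpsibar_i: the linear functional picking
  the coefficient of the top monomial, normalised so that the integral of tau V is 1.\<close>
definition berezin :: "'v::linorder set \<Rightarrow> 'v gr \<Rightarrow> complex" where
  "berezin V f = f (V \<times> UNIV) / tau V (V \<times> UNIV)"

definition hyperforests_avoiding :: "'v set \<Rightarrow> 'v set set \<Rightarrow> 'v set list \<Rightarrow> 'v set set set" where
  "hyperforests_avoiding V E Cs = {F. F \<subseteq> E \<and> hyperforest V F \<and> (\<forall>C\<in>set Cs. C \<notin> F)
       \<and> hyperforest V (F \<union> set Cs)}"

end

theory Submission
  imports Defs
begin

text \<open>
  All ingredients of the integrand are even elements of the Grassmann algebra, and the even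
  part is a commutative ring in which the bilinears \<open>psibar i * psi j\<close> anticommute in
  each index. Choosing a root \<open>v \<in> A\<close> one finds
  \<open>f A = \<lambda> (1 - |A|) \<tau> A + (\<Prod>i \<in> A - {v}. (psibar i - psibar v) (psi i - psi v))\<close>,
  and from this \<open>f A * f B = f (A \<union> B)\<close> when \<open>A\<close> and \<open>B\<close> share exactly one vertex,
  while \<open>f A * f B = 0\<close> when they share two. Hence a product of \<open>f\<close>'s over a set of
  hyperedges is the product of \<open>f T\<close> over its connected components \<open>T\<close> if the hyperedges
  form a hyperforest, and zero otherwise; adding the \<open>C\<^sub>\<gamma>\<close> as further hyperedges merges
  \<open>|C\<^sub>\<gamma>|\<close> components into one. All terms of the exponent are nilpotent, so the
  exponential factorises as \<open>(\<Prod>i. 1 + \<lambda> psibar i psi i) (\<Prod>A. 1 + w A f A)\<close>, and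
  \<open>f T (\<Prod>i \<in> T. 1 + \<lambda> psibar i psi i) = \<lambda> \<tau> T + (terms of lower degree)\<close>: every
  component contributes a factor \<open>\<lambda>\<close> to the Berezin integral.
\<close>

section \<open>Signs of shuffles\<close>

definition inversions :: "'a::ord set \<Rightarrow> 'a set \<Rightarrow> ('a \<times> 'a) set" where
  "inversions S T = {(s, t). s \<in> S \<and> t \<in> T \<and> t < s}"

lemma gsign_eq_inversions: "gsign S T = (-1) ^ card (inversions S T)"
  by (simp add: gsign_def inversions_def)

lemma finite_inversions: "finite S \<Longrightarrow> finite T \<Longrightarrow> finite (inversions S T)"
  by (rule finite_subset[of _ "S \<times> T"]) (auto simp: inversions_def)

lemma gsign_Un_left:
  assumes "A \<inter> B = {}" "finite A" "finite B" "finite C"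
  shows "gsign (A \<union> B) C = gsign A C * gsign B C"
proof -
  have "inversions (A \<union> B) C = inversions A C \<union> inversions B C" by (auto simp: inversions_def)
  moreover have "inversions A C \<inter> inversions B C = {}" using assms(1) by (auto simp: inversions_def)
  ultimately have "card (inversions (A \<union> B) C) = card (inversions A C) + card (inversions B C)"
    using assms by (simp add: card_Un_disjoint finite_inversions)
  then show ?thesis by (simp add: gsign_eq_inversions power_add)
qed

lemma gsign_Un_right:
  assumes "B \<inter> C = {}" "finite A" "finite B" "finite C"
  shows "gsign A (B \<union> C) = gsign A B * gsign A C"
proof -
  have "inversions A (B \<union> C) = inversions A B \<union> inversions A C" by (auto simp: inversions_def)
  moreover have "inversions A B \<inter> inversions A C = {}" using assms(1) by (auto simp: inversions_def)
  ultimately have "card (inversions A (B \<union> C)) = card (inversions A B) + card (inversions A C)"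
    using assms by (simp add: card_Un_disjoint finite_inversions)
  then show ?thesis by (simp add: gsign_eq_inversions power_add)
qed

lemma gsign_empty_left [simp]: "gsign {} T = 1"
  by (simp add: gsign_def)

lemma gsign_swap_mult:
  assumes "A \<inter> B = {}" "finite A" "finite B"
  shows "gsign A B * gsign B A = (-1) ^ (card A * card B)"
proof -
  have split: "A \<times> B = inversions A B \<union> (prod.swap ` inversions B A)"
  proof
    show "A \<times> B \<subseteq> inversions A B \<union> (prod.swap ` inversions B A)"
    proof clarify
      fix a b assume ab: "a \<in> A" "b \<in> B" and nn: "(a, b) \<notin> prod.swap ` inversions B A"
      have "a \<noteq> b" using ab assms(1) by auto
      show "(a, b) \<in> inversions A B"
      proof (cases "b < a")
        case True thus ?thesis using ab by (auto simp: inversions_def)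
      next
        case False hence "a < b" using \<open>a \<noteq> b\<close> by auto
        hence "(b, a) \<in> inversions B A" using ab by (auto simp: inversions_def)
        hence "prod.swap (b, a) \<in> prod.swap ` inversions B A" by blast
        thus ?thesis using nn by simp
      qed
    qed
  qed (auto simp: inversions_def)
  have d: "inversions A B \<inter> (prod.swap ` inversions B A) = {}" by (auto simp: inversions_def)
  have "card (A \<times> B) = card (inversions A B) + card (prod.swap ` inversions B A)"
    unfolding split using assms by (intro card_Un_disjoint d) (auto intro: finite_inversions)
  moreover have "card (prod.swap ` inversions B A) = card (inversions B A)"
    by (rule card_image[OF inj_swap])
  ultimately show ?thesis by (simp add: gsign_eq_inversions power_add[symmetric]
      card_cartesian_product)
qed

lemma gsign_mult_self: "gsign A B * gsign A B = 1"
  by (simp add: gsign_def power_mult_distrib[symmetric] power_add[symmetric] flip: power_add)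

lemma gsign_commute_even:
  assumes "A \<inter> B = {}" "finite A" "finite B" "even (card A)"
  shows "gsign A B = gsign B A"
proof -
  have "gsign A B * gsign B A = 1" using gsign_swap_mult[OF assms(1-3)] assms(4) by simp
  hence "gsign A B * (gsign A B * gsign B A) = gsign A B" by simp
  thus ?thesis by (simp add: mult.assoc[symmetric] gsign_mult_self)
qed

lemma gsign_assoc:
  assumes "finite U" "R \<subseteq> U" "T \<subseteq> U - R"
  shows "gsign (R \<union> T) (U - R - T) * gsign R T = gsign R (U - R) * gsign T (U - R - T)"
proof -
  have fin: "finite R" "finite T" "finite (U - R - T)"
    using assms by (auto intro: finite_subset)
  have left: "gsign (R \<union> T) (U - R - T) = gsign R (U - R - T) * gsign T (U - R - T)"
    using assms fin by (intro gsign_Un_left) auto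
  have "U - R = T \<union> (U - R - T)" using assms(3) by auto
  hence "gsign R (U - R) = gsign R (T \<union> (U - R - T))" by (rule arg_cong)
  also have "\<dots> = gsign R T * gsign R (U - R - T)"
    by (rule gsign_Un_right) (use fin in auto)
  finally show ?thesis using left by (simp add: mult_ac)
qed

lemma gmul_assoc: "gmul (gmul f g) h = gmul f (gmul g h)"
proof (rule ext)
  fix U :: "('a \<times> bool) set"
  show "gmul (gmul f g) h U = gmul f (gmul g h) U"
  proof (cases "finite U")
    case False thus ?thesis by (simp add: gmul_def)
  next
    case fin: True
    define t where "t R T = gsign R (U - R) * gsign T (U - R - T) * (f R * (g T * h (U - R - T)))"
      for R T
    define phi where "phi S R = gsign S (U - S) * gsign R (S - R) * (f R * (g (S - R) * h (U - S)))"
      for S R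
    have "gmul (gmul f g) h U = (\<Sum>S\<in>Pow U. \<Sum>R\<in>Pow S. phi S R)"
      unfolding gmul_def phi_def
      by (rule sum.cong[OF refl]) (simp add: sum_distrib_left sum_distrib_right mult_ac)
    also have "\<dots> = (\<Sum>S\<in>Pow U. \<Sum>R\<in>{R. R \<in> Pow U \<and> R \<subseteq> S}. phi S R)"
      by (rule sum.cong[OF refl], rule sum.cong) auto
    also have "\<dots> = (\<Sum>R\<in>Pow U. \<Sum>S\<in>{S. S \<in> Pow U \<and> R \<subseteq> S}. phi S R)"
      by (rule sum.swap_restrict) (use fin in auto)
    also have "\<dots> = (\<Sum>R\<in>Pow U. \<Sum>T\<in>Pow (U - R). t R T)"
    proof (rule sum.cong[OF refl])
      fix R assume R: "R \<in> Pow U"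
      show "(\<Sum>S\<in>{S. S \<in> Pow U \<and> R \<subseteq> S}. phi S R) = (\<Sum>T\<in>Pow (U - R). t R T)"
      proof (rule sym, rule sum.reindex_bij_witness[where j="\<lambda>T. R \<union> T" and i="\<lambda>S. S - R"])
        fix T assume T: "T \<in> Pow (U - R)"
        have "(R \<union> T) - R = T" "U - (R \<union> T) = U - R - T" using T by auto
        hence "phi (R \<union> T) R = gsign (R \<union> T) (U - R - T) * gsign R T * (f R * (g T * h (U - R - T)))"
          unfolding phi_def by simp
        thus "phi (R \<union> T) R = t R T"
          unfolding t_def using gsign_assoc[OF fin] R T by simp
      qed (use R in auto)
    qed
    also have "\<dots> = gmul f (gmul g h) U"
      unfolding gmul_def t_def
      by (rule sum.cong[OF refl]) (simp add: sum_distrib_left mult_ac)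
    finally show ?thesis .
  qed
qed

lemma gmul_gadd_left: "gmul (gadd f g) h = gadd (gmul f h) (gmul g h)"
  by (rule ext) (simp add: gmul_def gadd_def distrib_left distrib_right sum.distrib)

lemma gmul_gone_left: "gmul gone f U = (if finite U then f U else 0)"
proof (cases "finite U")
  case True
  have "gmul gone f U = (\<Sum>S\<in>Pow U. if S = {} then f U else 0)"
    unfolding gmul_def gone_def gscalar_def by (rule sum.cong) auto
  also have "\<dots> = f U" using True by (simp add: sum.delta)
  finally show ?thesis using True by simp
qed (simp add: gmul_def)

lemma card_eq_card_add_card_Diff: "finite U \<Longrightarrow> S \<subseteq> U \<Longrightarrow> card U = card S + card (U - S)"
  by (metis card_Diff_subset card_mono finite_subset le_add_diff_inverse)

definition even_support :: "'v gr \<Rightarrow> bool" where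
  "even_support f \<longleftrightarrow> (\<forall>U. f U \<noteq> 0 \<longrightarrow> finite U \<and> even (card U))"

lemma gmul_commute_even:
  assumes "even_support f"
  shows "gmul f g = gmul g f"
proof (rule ext)
  fix U :: "('a \<times> bool) set"
  show "gmul f g U = gmul g f U"
  proof (cases "finite U")
    case False thus ?thesis by (simp add: gmul_def)
  next
    case fin: True
    show ?thesis unfolding gmul_def
    proof (rule sum.reindex_bij_witness[where i="\<lambda>S. U - S" and j="\<lambda>S. U - S"])
      fix S assume S: "S \<in> Pow U"
      show "gsign (U - S) (U - (U - S)) * g (U - S) * f (U - (U - S))
          = gsign S (U - S) * f S * g (U - S)"
      proof (cases "f S = 0")
        case True thus ?thesis using S by (simp add: Diff_Diff_Int Int_absorb1)
      next
        case False
        hence ev: "even (card S)" using assms by (auto simp: even_support_def)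
        have "U - (U - S) = S" using S by auto
        moreover have "gsign S (U - S) = gsign (U - S) S"
          by (rule gsign_commute_even) (use S fin ev in \<open>auto intro: finite_subset\<close>)
        ultimately show ?thesis by (simp add: mult_ac)
      qed
    qed auto
  qed
qed

lemma even_support_gmul: "even_support f \<Longrightarrow> even_support g \<Longrightarrow> even_support (gmul f g)"
  unfolding even_support_def
proof (intro allI impI)
  fix U assume ef: "\<forall>U. f U \<noteq> 0 \<longrightarrow> finite U \<and> even (card U)"
    and eg: "\<forall>U. g U \<noteq> 0 \<longrightarrow> finite U \<and> even (card U)" and nz: "gmul f g U \<noteq> 0"
  hence fin: "finite U" by (auto simp: gmul_def)
  from nz obtain S where S: "S \<in> Pow U" "gsign S (U - S) * f S * g (U - S) \<noteq> 0"
    unfolding gmul_def by (meson sum.neutral)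
  hence "even (card S)" "even (card (U - S))" using ef eg by auto
  moreover have "card U = card S + card (U - S)"
    using S(1) fin by (simp add: card_eq_card_add_card_Diff)
  ultimately show "finite U \<and> even (card U)" using fin by simp
qed

lemma even_support_gadd: "even_support f \<Longrightarrow> even_support g \<Longrightarrow> even_support (gadd f g)"
  unfolding even_support_def gadd_def by (metis add.left_neutral add.right_neutral)

lemma even_support_gone: "even_support gone"
  by (auto simp: even_support_def gone_def gscalar_def)

lemma even_support_gscalar: "even_support (gscalar c)"
  by (auto simp: even_support_def gscalar_def)

lemma even_support_zero: "even_support (\<lambda>U. 0)"
  by (auto simp: even_support_def)

lemma even_support_uminus: "even_support f \<Longrightarrow> even_support (\<lambda>U. - f U)"
  by (auto simp: even_support_def)

lemma gsign_single: "gsign {a} {b} = (if b < a then -1 else 1)"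
proof -
  have "{(s, t). s \<in> {a} \<and> t \<in> {b} \<and> t < s} = (if b < a then {(a, b)} else {})" by auto
  thus ?thesis by (simp add: gsign_def)
qed

lemma gmul_ggen: "gmul (ggen a) (ggen b) U
    = (if U = {a, b} \<and> a \<noteq> b then (if b < a then -1 else 1) else 0)"
proof (cases "finite U")
  case fin: True
  have "gmul (ggen a) (ggen b) U =
      (\<Sum>S\<in>Pow U. if S = {a} then (if a \<in> U \<and> U - {a} = {b} then gsign {a} {b} else 0) else 0)"
    unfolding gmul_def ggen_def by (rule sum.cong) auto
  also have "\<dots> = (if a \<in> U \<and> U - {a} = {b} then gsign {a} {b} else 0)"
    using fin by (subst sum.delta) auto
  also have "\<dots> = (if U = {a, b} \<and> a \<noteq> b then (if b < a then -1 else 1) else 0)"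
    by (auto simp: gsign_single)
  finally show ?thesis .
next
  case False
  hence "U \<noteq> {a, b}" by auto
  thus ?thesis using False by (simp add: gmul_def)
qed

lemma even_support_gmul_ggen: "even_support (gmul (ggen a) (ggen b))"
  by (auto simp: even_support_def gmul_ggen split: if_splits)

definition gneg :: "'v gr \<Rightarrow> 'v gr" where "gneg f = (\<lambda>U. - f U)"

lemma gmul_gneg_left: "gmul (gneg f) g = gneg (gmul f g)"
  by (rule ext) (simp add: gmul_def gneg_def sum_negf)
lemma gmul_gneg_right: "gmul f (gneg g) = gneg (gmul f g)"
  by (rule ext) (simp add: gmul_def gneg_def sum_negf)
lemma gneg_gneg: "gneg (gneg f) = f"
  by (simp add: gneg_def)

lemma gmul_ggen_anticommute: "gmul (ggen a) (ggen b) = gneg (gmul (ggen b) (ggen a))"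
  by (rule ext) (auto simp: gneg_def gmul_ggen insert_commute)

lemma gmul_ggen_pairs_exchange: "gmul (gmul (ggen a) (ggen b)) (gmul (ggen c) (ggen d)) =
   gneg (gmul (gmul (ggen a) (ggen d)) (gmul (ggen c) (ggen b)))"
proof -
  have "gmul (ggen b) (gmul (ggen c) (ggen d)) = gneg (gmul (ggen d) (gmul (ggen c) (ggen b)))"
  proof -
    have "gmul (ggen b) (gmul (ggen c) (ggen d)) = gmul (ggen b) (gneg (gmul (ggen d) (ggen c)))"
      by (subst gmul_ggen_anticommute) rule
    also have "\<dots> = gneg (gmul (gmul (ggen b) (ggen d)) (ggen c))"
      by (simp add: gmul_gneg_right gmul_assoc)
    also have "\<dots> = gmul (gmul (ggen d) (ggen b)) (ggen c)"
      by (subst gmul_ggen_anticommute) (simp add: gmul_gneg_left gneg_gneg)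
    also have "\<dots> = gmul (ggen d) (gneg (gmul (ggen c) (ggen b)))"
      by (simp add: gmul_assoc gmul_ggen_anticommute[of c b] gmul_gneg_right gneg_gneg)
    also have "\<dots> = gneg (gmul (ggen d) (gmul (ggen c) (ggen b)))"
      by (simp add: gmul_gneg_right)
    finally show ?thesis .
  qed
  thus ?thesis by (simp add: gmul_assoc gmul_gneg_right)
qed

section \<open>The ring of even elements\<close>

typedef (overloaded) ('v::linorder) egr = "{f :: 'v gr. even_support f}" morphisms gr_of Abs_egr
  by (rule exI[of _ "\<lambda>U. 0"]) (simp add: even_support_zero)

setup_lifting type_definition_egr

instantiation egr :: (linorder) comm_ring_1
begin
lift_definition zero_egr :: "'v::linorder egr" is "\<lambda>U. 0" by (rule even_support_zero)
lift_definition one_egr :: "'v::linorder egr" is gone by (rule even_support_gone)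
lift_definition plus_egr :: "'v::linorder egr \<Rightarrow> 'v egr \<Rightarrow> 'v egr" is gadd by (rule even_support_gadd)
lift_definition times_egr :: "'v::linorder egr \<Rightarrow> 'v egr \<Rightarrow> 'v egr" is gmul
  by (rule even_support_gmul)
lift_definition uminus_egr :: "'v::linorder egr \<Rightarrow> 'v egr" is "\<lambda>f U. - f U"
  by (rule even_support_uminus)
lift_definition minus_egr :: "'v::linorder egr \<Rightarrow> 'v egr \<Rightarrow> 'v egr" is "\<lambda>f g U. f U - g U"
  unfolding even_support_def by (metis diff_self diff_zero eq_iff_diff_eq_0)
instance
proof
  fix a b c :: "'v::linorder egr"
  show "a * b * c = a * (b * c)" by transfer (rule gmul_assoc)
  show "a * b = b * a" by transfer (rule gmul_commute_even)
  show "1 * a = a" by transfer (rule ext, auto simp: gmul_gone_left even_support_def)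
  show "(a + b) * c = a * c + b * c" by transfer (rule gmul_gadd_left)
  show "a + b + c = a + (b + c)" by transfer (simp add: gadd_def add.assoc)
  show "a + b = b + a" by transfer (simp add: gadd_def add.commute)
  show "0 + a = a" by transfer (simp add: gadd_def)
  show "- a + a = 0" by transfer (simp add: gadd_def)
  show "a - b = a + - b" by transfer (simp add: gadd_def)
  show "(0::'v egr) \<noteq> 1" by transfer (metis gone_def gscalar_def one_neq_zero)
qed
end

lemma gr_of_mult: "gr_of (a * b) = gmul (gr_of a) (gr_of b)" by transfer rule
lemma gr_of_add: "gr_of (a + b) = gadd (gr_of a) (gr_of b)" by transfer rule
lemma gr_of_one: "gr_of 1 = gone" by transfer rule
lemma gr_of_zero: "gr_of 0 = (\<lambda>U. 0)" by transfer rule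
lemma gr_of_uminus: "gr_of (- a) = (\<lambda>U. - gr_of a U)" by transfer rule
lemma even_support_gr_of: "even_support (gr_of a)" by transfer
lemma gr_of_nonzero_finite: "gr_of a U \<noteq> 0 \<Longrightarrow> finite U"
  using even_support_gr_of[of a] by (auto simp: even_support_def)

lift_definition escal :: "complex \<Rightarrow> 'v::linorder egr" is gscalar by (rule even_support_gscalar)

lemma gr_of_escal: "gr_of (escal c) = gscalar c" by transfer rule

lemma gr_of_escal_mult: "gr_of (escal c * a) = gsmult c (gr_of a)"
proof (rule ext)
  fix U
  show "gr_of (escal c * a) U = gsmult c (gr_of a) U"
  proof (cases "finite U")
    case True
    have "gr_of (escal c * a) U = (\<Sum>S\<in>Pow U. if S = {} then c * gr_of a U else 0)"
      unfolding gr_of_mult gr_of_escal gmul_def gscalar_def by (rule sum.cong) auto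
    also have "\<dots> = c * gr_of a U" using True by (simp add: sum.delta)
    finally show ?thesis by (simp add: gsmult_def)
  next
    case False
    thus ?thesis using gr_of_nonzero_finite[of a U] by (auto simp: gr_of_mult gmul_def gsmult_def)
  qed
qed

lemma escal_add: "escal (a + b) = escal a + escal b" by transfer (auto simp: gscalar_def gadd_def)
lemma escal_mult: "escal (a * b) = (escal a * escal b :: 'v::linorder egr)"
  by (rule gr_of_inject[THEN iffD1])
    (auto simp: gr_of_escal_mult gr_of_escal gscalar_def gsmult_def)
lemma escal_one: "escal 1 = 1" by transfer (simp add: gone_def)
lemma escal_zero: "escal 0 = 0" by transfer (simp add: gscalar_def)
lemma escal_uminus: "escal (- a) = - escal a" by transfer (auto simp: gscalar_def)
lemma escal_of_nat: "escal (of_nat n) = of_nat n"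
  by (induction n) (simp_all add: escal_zero escal_add escal_one)
lemma escal_minus_one_mult: "escal (-1) * a = - a"
  by (simp add: escal_uminus escal_one)

lemma gr_of_sum: "gr_of (sum f I) = gsum (\<lambda>i. gr_of (f i)) I"
proof (cases "finite I")
  case True thus ?thesis
    by (induction rule: finite_induct) (auto simp: gr_of_zero gr_of_add gsum_def gadd_def)
next
  case False thus ?thesis by (simp add: gr_of_zero gsum_def)
qed

lemma gr_of_power: "gr_of (a ^ n) = gpow (gr_of a) n"
  by (induction n) (simp_all add: gr_of_one gr_of_mult)

lemma gr_of_prod_list: "gr_of (prod_list (map f xs)) = foldr gmul (map (\<lambda>x. gr_of (f x)) xs) gone"
  by (induction xs) (simp_all add: gr_of_one gr_of_mult)

lemma escal_prod: "escal (\<Prod>A\<in>F. f A) = (\<Prod>A\<in>F. (escal (f A) :: 'v::linorder egr))"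
proof (cases "finite F")
  case True thus ?thesis by (induction F rule: finite_induct) (simp_all add: escal_one escal_mult)
next
  case False thus ?thesis by (simp add: escal_one)
qed

lemma gr_of_sum_apply: "gr_of (\<Sum>i\<in>I. f i) U = (\<Sum>i\<in>I. gr_of (f i) U)"
  by (simp add: gr_of_sum gsum_def)

lemma gr_of_escal_mult_apply: "gr_of (escal c * a) U = c * gr_of a U"
  by (simp add: gr_of_escal_mult gsmult_def)

lemma egr_eqI: "(\<And>U. gr_of a U = gr_of b U) \<Longrightarrow> a = b"
  by (metis gr_of_inject ext)

lift_definition epair :: "'v::linorder \<Rightarrow> 'v \<Rightarrow> 'v egr" is "\<lambda>i j. gmul (psibar i) (psi j)"
  unfolding psi_def psibar_def by (rule even_support_gmul_ggen)

lemma gr_of_epair: "gr_of (epair i j) = gmul (psibar i) (psi j)" by transfer rule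

lemma gr_of_epair_eq: "gr_of (epair i j) U
    = (if U = {(i, True), (j, False)} \<and> (i, True) \<noteq> (j, False) then
        (if (j, False) < (i, True) then -1 else 1) else 0)"
  by (simp add: gr_of_epair psi_def psibar_def gmul_ggen)

lemma epair_exchange: "epair i j * epair k l = - (epair i l * epair k j)"
  by transfer (unfold psi_def psibar_def, subst gmul_ggen_pairs_exchange, simp add: gneg_def)

lemma egr_eq_uminus_imp_zero: "(a::'v::linorder egr) = - a \<Longrightarrow> a = 0"
proof -
  assume "a = - a"
  hence "a + a = 0" by (metis add.right_inverse)
  hence "escal (1/2) * (a + a) = 0" by simp
  moreover have "escal (1/2) * (a + a) = (escal (1/2) + escal (1/2)) * a"
    by (simp add: algebra_simps)
  moreover have "escal (1/2) + escal (1/2) = (escal 1 :: 'v egr)" by (simp flip: escal_add)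
  ultimately show "a = 0" by (simp add: escal_one)
qed

lemma epair_mult_same_row: "epair i j * epair i l = 0"
  by (rule egr_eq_uminus_imp_zero) (subst (2) mult.commute, rule epair_exchange)
lemma epair_mult_same_col: "epair i j * epair k j = 0"
  by (rule egr_eq_uminus_imp_zero) (rule epair_exchange)

definition edens :: "'v::linorder \<Rightarrow> 'v egr" where "edens i = epair i i"

lemma gr_of_edens: "gr_of (edens i) = gmul (psibar i) (psi i)" by (simp add: edens_def gr_of_epair)

lemma edens_mult_self: "edens i * edens i = 0" by (simp add: edens_def epair_mult_same_row)
lemma edens_mult_self_left: "edens i * (edens i * z) = 0"
  by (simp add: mult.assoc[symmetric] edens_mult_self)

lemma epair_mult_edens_row: "epair i j * edens i = 0" by (simp add: edens_def epair_mult_same_row)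
lemma epair_mult_edens_col: "epair i j * edens j = 0" by (simp add: edens_def epair_mult_same_col)
lemma edens_mult_epair_row: "edens i * epair i j = 0" by (simp add: edens_def epair_mult_same_row)
lemma edens_mult_epair_col: "edens j * epair i j = 0" by (simp add: edens_def epair_mult_same_col)

definition etau :: "'v::linorder set \<Rightarrow> 'v egr" where "etau A = (\<Prod>i\<in>A. edens i)"

lemma etau_empty: "etau {} = 1" by (simp add: etau_def)

lemma etau_insert: "finite A \<Longrightarrow> k \<notin> A \<Longrightarrow> etau (insert k A) = edens k * etau A"
  by (simp add: etau_def)
lemma etau_remove: "finite A \<Longrightarrow> v \<in> A \<Longrightarrow> etau A = edens v * etau (A - {v})"
  by (simp add: etau_def prod.remove)
lemma etau_union: "finite A \<Longrightarrow> finite B \<Longrightarrow> A \<inter> B = {} \<Longrightarrow> etau (A \<union> B) = etau A * etau B"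
  by (simp add: etau_def prod.union_disjoint)

lemma etau_mult_edens: "finite A \<Longrightarrow> v \<in> A \<Longrightarrow> etau A * edens v = 0"
  by (simp add: etau_remove[of A v] mult.commute[of "edens v"] mult.assoc edens_mult_self)
lemma etau_mult_epair_row: "finite A \<Longrightarrow> i \<in> A \<Longrightarrow> etau A * epair i j = 0"
  by (simp add: etau_remove[of A i] mult.assoc mult.commute[of "edens i"] edens_mult_epair_row)
lemma etau_mult_epair_col: "finite A \<Longrightarrow> j \<in> A \<Longrightarrow> etau A * epair i j = 0"
  by (simp add: etau_remove[of A j] mult.assoc mult.commute[of "edens j"] edens_mult_epair_col)

lemma tau_eq_gr_of_etau: "finite A \<Longrightarrow> tau A = gr_of (etau A)"
proof -
  assume fA: "finite A"
  have "tau A = gr_of (prod_list (map edens (sorted_list_of_set A)))"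
    unfolding tau_def glistprod_def gr_of_prod_list gr_of_edens by simp
  also have "prod_list (map edens (sorted_list_of_set A)) = etau A"
    unfolding etau_def using fA
    by (metis prod.distinct_set_conv_list distinct_sorted_list_of_set set_sorted_list_of_set)
  finally show ?thesis .
qed

section \<open>The hyperedge polynomials\<close>

definition efpoly0 :: "'v::linorder set \<Rightarrow> 'v egr" where
  "efpoly0 A = (\<Sum>i\<in>A. etau (A - {i})) - (\<Sum>i\<in>A. \<Sum>j\<in>A - {i}. epair i j * etau (A - {i, j}))"

definition efpoly :: "complex \<Rightarrow> 'v::linorder set \<Rightarrow> 'v egr" where
  "efpoly lam A = escal (lam * (1 - of_nat (card A))) * etau A + efpoly0 A"

lemma fpoly_eq_gr_of_efpoly: "finite A \<Longrightarrow> fpoly lam A = gr_of (efpoly lam A)"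
proof -
  assume fA: "finite A"
  let ?P = "{(i, j). i \<in> A \<and> j \<in> A \<and> i \<noteq> j}"
  have P: "?P = Sigma A (\<lambda>i. A - {i})" by auto
  have s: "(\<Sum>i\<in>A. \<Sum>j\<in>A - {i}. epair i j * etau (A - {i, j}))
      = (\<Sum>p\<in>?P. case p of (i, j) \<Rightarrow> epair i j * etau (A - {i, j}))"
    unfolding P using fA by (subst sum.Sigma) auto
  have fin: "finite (A - X)" for X using fA by auto
  have "efpoly lam A = escal (lam * (1 - of_nat (card A))) * etau A + (\<Sum>i\<in>A. etau (A - {i}))
      + escal (-1) * (\<Sum>p\<in>?P. case p of (i, j) \<Rightarrow> epair i j * etau (A - {i, j}))"
    unfolding efpoly_def efpoly0_def s escal_minus_one_mult by (simp add: algebra_simps)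
  hence "gr_of (efpoly lam A) = gadd (gadd (gsmult (lam * (1 - of_nat (card A))) (gr_of (etau A)))
       (gsum (\<lambda>i. gr_of (etau (A - {i}))) A))
       (gsmult (-1) (gsum (\<lambda>p. gr_of (case p of (i, j) \<Rightarrow> epair i j * etau (A - {i, j}))) ?P))"
    by (simp add: gr_of_add gr_of_escal_mult gr_of_sum)
  also have "\<dots> = fpoly lam A"
    unfolding fpoly_def using fA
    by (simp add: tau_eq_gr_of_etau fin gsum_def split_def gr_of_mult gr_of_epair)
  finally show ?thesis by simp
qed

lemma efpoly0_mult_edens_new:
  assumes "finite A" "k \<notin> A"
  shows "efpoly0 A * edens k = (\<Sum>i\<in>A. etau (insert k A - {i}))
      - (\<Sum>i\<in>A. \<Sum>j\<in>A - {i}. epair i j * etau (insert k A - {i, j}))"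
proof -
  have a: "etau (A - {i}) * edens k = etau (insert k A - {i})" if "i \<in> A" for i
  proof -
    have "insert k A - {i} = insert k (A - {i})" using that assms by auto
    thus ?thesis using assms by (simp add: etau_insert mult.commute)
  qed
  have b: "epair i j * etau (A - {i, j}) * edens k
      = epair i j * etau (insert k A - {i, j})" if "i \<in> A" "j \<in> A" for i j
  proof -
    have "insert k A - {i, j} = insert k (A - {i, j})" using that assms by auto
    thus ?thesis using assms by (simp add: etau_insert mult_ac)
  qed
  show ?thesis unfolding efpoly0_def left_diff_distrib sum_distrib_right
    by (intro arg_cong2[where f="(-)"] sum.cong refl) (auto simp: a b)
qed

lemma efpoly0_mult_edens_mem:
  assumes "finite A" "v \<in> A"
  shows "efpoly0 A * edens v = etau A"
proof -
  have vanish: "epair i j * etau (A - {i, j}) * edens v = 0" if "i \<in> A" "j \<in> A - {i}" for i j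
  proof (cases "v = i \<or> v = j")
    case True thus ?thesis
      by (metis mult.left_commute mult.commute mult.assoc epair_mult_edens_row epair_mult_edens_col
          mult_zero_left)
  next
    case False hence "v \<in> A - {i, j}" using assms by auto
    thus ?thesis using assms by (simp add: mult.assoc etau_mult_edens)
  qed
  have "(\<Sum>i\<in>A. etau (A - {i}) * edens v)
      = etau (A - {v}) * edens v + (\<Sum>i\<in>A - {v}. etau (A - {i}) * edens v)"
    using assms by (simp add: sum.remove)
  also have "(\<Sum>i\<in>A - {v}. etau (A - {i}) * edens v) = 0"
    using assms by (intro sum.neutral) (auto intro: etau_mult_edens)
  also have "etau (A - {v}) * edens v = etau A" using assms
    by (simp add: etau_remove[of A v] mult.commute)
  finally have singles: "(\<Sum>i\<in>A. etau (A - {i}) * edens v) = etau A" by simp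
  have pairs: "(\<Sum>i\<in>A. \<Sum>j\<in>A - {i}. epair i j * etau (A - {i, j}) * edens v) = 0"
    by (intro sum.neutral ballI) (simp add: vanish)
  show ?thesis unfolding efpoly0_def left_diff_distrib sum_distrib_right singles pairs by simp
qed

lemma sum_pairs_swap:
  assumes "finite A"
  shows "(\<Sum>i\<in>A. \<Sum>j\<in>A - {i}. g i j) = (\<Sum>j\<in>A. \<Sum>i\<in>A - {j}. g i j)"
proof -
  have "(\<Sum>i\<in>A. \<Sum>j\<in>{j \<in> A. i \<noteq> j}. g i j) = (\<Sum>j\<in>A. \<Sum>i\<in>{i \<in> A. i \<noteq> j}. g i j)"
    by (rule sum.swap_restrict) (use assms in auto)
  moreover have "\<And>i. A - {i} = {j \<in> A. i \<noteq> j}" "\<And>j. A - {j} = {i \<in> A. i \<noteq> j}" by auto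
  ultimately show ?thesis by simp
qed

lemma sum_pairs_only_row:
  assumes "finite A" "v \<in> A" "\<And>i j. i \<in> A \<Longrightarrow> j \<in> A - {i} \<Longrightarrow> i \<noteq> v \<Longrightarrow> g i j = 0"
  shows "(\<Sum>i\<in>A. \<Sum>j\<in>A - {i}. g i j) = (\<Sum>j\<in>A - {v}. g v j)"
proof -
  have "(\<Sum>i\<in>A - {v}. \<Sum>j\<in>A - {i}. g i j) = 0"
    using assms(3) by (intro sum.neutral ballI) auto
  thus ?thesis using assms(1,2) by (simp add: sum.remove)
qed

lemma sum_pairs_only_col:
  assumes "finite A" "v \<in> A" "\<And>i j. i \<in> A \<Longrightarrow> j \<in> A - {i} \<Longrightarrow> j \<noteq> v \<Longrightarrow> g i j = 0"
  shows "(\<Sum>i\<in>A. \<Sum>j\<in>A - {i}. g i j) = (\<Sum>i\<in>A - {v}. g i v)"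
proof -
  have "(\<Sum>j\<in>A. \<Sum>i\<in>A - {j}. g i j) = (\<Sum>i\<in>A - {v}. g i v)"
    by (rule sum_pairs_only_row[where g = "\<lambda>j i. g i j", OF assms(1,2)]) (use assms(3) in auto)
  with sum_pairs_swap[OF assms(1), of g] show ?thesis by (rule trans)
qed

lemma etau_remove_two:
  assumes "finite A" "v \<in> A" "j \<in> A" "j \<noteq> v"
  shows "edens v * etau (A - {v, j}) = etau (A - {j})"
proof -
  have "etau (A - {j}) = edens v * etau (A - {j} - {v})"
    using assms by (intro etau_remove) auto
  also have "A - {j} - {v} = A - {v, j}" by auto
  finally show ?thesis by (rule sym)
qed

lemma efpoly0_mult_epair_col_mem:
  assumes "finite A" "v \<in> A"
  shows "efpoly0 A * epair k v = (\<Sum>j\<in>A. epair k j * etau (A - {j}))"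
proof -
  have "(\<Sum>i\<in>A - {v}. etau (A - {i}) * epair k v) = 0"
    using assms by (intro sum.neutral ballI etau_mult_epair_col) auto
  hence singles: "(\<Sum>i\<in>A. etau (A - {i}) * epair k v) = etau (A - {v}) * epair k v"
    using assms by (simp add: sum.remove)
  have vanish: "epair i j * etau (A - {i, j}) * epair k v = 0"
    if "i \<in> A" "j \<in> A - {i}" "i \<noteq> v" for i j
  proof (cases "j = v")
    case True
    have "epair i v * etau (A - {i, v}) * epair k v = 0"
      by (metis mult.left_commute mult.commute epair_mult_same_col mult_zero_right)
    thus ?thesis using True by simp
  next
    case False hence "v \<in> A - {i, j}" using assms that by auto
    thus ?thesis using assms by (simp add: mult.assoc etau_mult_epair_col)
  qed
  have exchange: "epair v j * etau (A - {v, j}) * epair k v = - (epair k j * etau (A - {j}))"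
    if "j \<in> A - {v}" for j
  proof -
    have "epair v j * etau (A - {v, j}) * epair k v = etau (A - {v, j}) * (epair v j * epair k v)"
      by (simp add: mult_ac)
    also have "\<dots> = etau (A - {v, j}) * (- (epair v v * epair k j))"
      by (simp only: epair_exchange[of v j k v])
    also have "\<dots> = - (epair k j * (edens v * etau (A - {v, j})))"
      by (simp add: edens_def mult_ac)
    finally show ?thesis using that assms etau_remove_two[of A v j] by simp
  qed
  have pairs: "(\<Sum>i\<in>A. \<Sum>j\<in>A - {i}. epair i j * etau (A - {i, j}) * epair k v)
      = - (\<Sum>j\<in>A - {v}. epair k j * etau (A - {j}))"
  proof -
    have "(\<Sum>i\<in>A. \<Sum>j\<in>A - {i}. epair i j * etau (A - {i, j}) * epair k v)
        = (\<Sum>j\<in>A - {v}. epair v j * etau (A - {v, j}) * epair k v)"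
      by (rule sum_pairs_only_row[OF assms vanish])
    thus ?thesis using exchange by (simp add: sum_negf)
  qed
  have "efpoly0 A * epair k v = etau (A - {v}) * epair k v
      + (\<Sum>j\<in>A - {v}. epair k j * etau (A - {j}))"
    unfolding efpoly0_def left_diff_distrib sum_distrib_right singles pairs by simp
  also have "\<dots> = (\<Sum>j\<in>A. epair k j * etau (A - {j}))"
    using assms by (simp add: sum.remove mult.commute)
  finally show ?thesis .
qed

lemma efpoly0_mult_epair_row_mem:
  assumes "finite A" "v \<in> A"
  shows "efpoly0 A * epair v k = (\<Sum>i\<in>A. epair i k * etau (A - {i}))"
proof -
  have "(\<Sum>i\<in>A - {v}. etau (A - {i}) * epair v k) = 0"
    using assms by (intro sum.neutral ballI etau_mult_epair_row) auto
  hence singles: "(\<Sum>i\<in>A. etau (A - {i}) * epair v k) = etau (A - {v}) * epair v k"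
    using assms by (simp add: sum.remove)
  have vanish: "epair i j * etau (A - {i, j}) * epair v k = 0"
    if "i \<in> A" "j \<in> A - {i}" "j \<noteq> v" for i j
  proof (cases "i = v")
    case True
    have "epair v j * etau (A - {v, j}) * epair v k = 0"
      by (metis mult.left_commute mult.commute epair_mult_same_row mult_zero_right)
    thus ?thesis using True by simp
  next
    case False hence "v \<in> A - {i, j}" using assms that by auto
    thus ?thesis using assms by (simp add: mult.assoc etau_mult_epair_row)
  qed
  have exchange: "epair i v * etau (A - {i, v}) * epair v k = - (epair i k * etau (A - {i}))"
    if "i \<in> A - {v}" for i
  proof -
    have "epair i v * etau (A - {i, v}) * epair v k = etau (A - {v, i}) * (epair i v * epair v k)"
      by (simp add: mult_ac insert_commute)
    also have "\<dots> = etau (A - {v, i}) * (- (epair i k * epair v v))"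
      by (simp only: epair_exchange[of i v v k])
    also have "\<dots> = - (epair i k * (edens v * etau (A - {v, i})))"
      by (simp add: edens_def mult_ac)
    finally show ?thesis using that assms etau_remove_two[of A v i] by simp
  qed
  have pairs: "(\<Sum>i\<in>A. \<Sum>j\<in>A - {i}. epair i j * etau (A - {i, j}) * epair v k)
      = - (\<Sum>i\<in>A - {v}. epair i k * etau (A - {i}))"
  proof -
    have "(\<Sum>i\<in>A. \<Sum>j\<in>A - {i}. epair i j * etau (A - {i, j}) * epair v k)
        = (\<Sum>i\<in>A - {v}. epair i v * etau (A - {i, v}) * epair v k)"
      by (rule sum_pairs_only_col[OF assms vanish])
    thus ?thesis using exchange by (simp add: sum_negf)
  qed
  have "efpoly0 A * epair v k = etau (A - {v}) * epair v k
      + (\<Sum>i\<in>A - {v}. epair i k * etau (A - {i}))"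
    unfolding efpoly0_def left_diff_distrib sum_distrib_right singles pairs by simp
  also have "\<dots> = (\<Sum>i\<in>A. epair i k * etau (A - {i}))"
    using assms by (simp add: sum.remove mult.commute)
  finally show ?thesis .
qed

lemma efpoly0_insert_expand:
  assumes "finite A" "k \<notin> A"
  shows "efpoly0 (insert k A) = etau A + (\<Sum>i\<in>A. etau (insert k A - {i}))
     - ((\<Sum>i\<in>A. \<Sum>j\<in>A - {i}. epair i j * etau (insert k A - {i, j}))
        + (\<Sum>j\<in>A. epair k j * etau (A - {j})) + (\<Sum>i\<in>A. epair i k * etau (A - {i})))"
proof -
  have s1: "(\<Sum>i\<in>insert k A. etau (insert k A - {i})) = etau A + (\<Sum>i\<in>A. etau (insert k A - {i}))"
    using assms by (simp add: insert_Diff_if)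
  have s2: "(\<Sum>i\<in>insert k A. \<Sum>j\<in>insert k A - {i}. epair i j * etau (insert k A - {i, j}))
      = (\<Sum>j\<in>A. epair k j * etau (A - {j}))
          + ((\<Sum>i\<in>A. \<Sum>j\<in>A - {i}. epair i j * etau (insert k A - {i, j}))
              + (\<Sum>i\<in>A. epair i k * etau (A - {i})))"
  proof -
    have "(\<Sum>i\<in>insert k A. \<Sum>j\<in>insert k A - {i}. epair i j * etau (insert k A - {i, j}))
       = (\<Sum>j\<in>insert k A - {k}. epair k j * etau (insert k A - {k, j}))
           + (\<Sum>i\<in>A. \<Sum>j\<in>insert k A - {i}. epair i j * etau (insert k A - {i, j}))"
      using assms by simp
    also have "insert k A - {k} = A" using assms by auto
    also have "(\<Sum>j\<in>A. epair k j * etau (insert k A - {k, j})) = (\<Sum>j\<in>A. epair k j * etau (A - {j}))"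
    proof (rule sum.cong[OF refl])
      fix j assume "j \<in> A" hence "insert k A - {k, j} = A - {j}" using assms by auto
      thus "epair k j * etau (insert k A - {k, j}) = epair k j * etau (A - {j})" by simp
    qed
    also have "(\<Sum>i\<in>A. \<Sum>j\<in>insert k A - {i}. epair i j * etau (insert k A - {i, j}))
       = (\<Sum>i\<in>A. (\<Sum>j\<in>A - {i}. epair i j * etau (insert k A - {i, j})) + epair i k * etau (A - {i}))"
    proof (rule sum.cong[OF refl])
      fix i assume i: "i \<in> A"
      have "insert k A - {i} = insert k (A - {i})" using i assms by auto
      moreover have "insert k A - {i, k} = A - {i}" using i assms by auto
      ultimately show "(\<Sum>j\<in>insert k A - {i}. epair i j * etau (insert k A - {i, j}))
          = (\<Sum>j\<in>A - {i}. epair i j * etau (insert k A - {i, j})) + epair i k * etau (A - {i})"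
        using assms by (simp add: add.commute)
    qed
    finally show ?thesis by (simp add: sum.distrib)
  qed
  show ?thesis unfolding efpoly0_def s1 s2 by (simp add: algebra_simps)
qed

text \<open>\<open>ediff v i\<close> is \<open>(psibar i - psibar v) * (psi i - psi v)\<close>, expanded.\<close>

definition ediff :: "'v::linorder \<Rightarrow> 'v \<Rightarrow> 'v egr" where
  "ediff v i = edens i + edens v - epair i v - epair v i"

definition ediff_prod :: "'v::linorder \<Rightarrow> 'v set \<Rightarrow> 'v egr" where
  "ediff_prod v A = (\<Prod>i\<in>A - {v}. ediff v i)"

lemma efpoly0_insert:
  assumes "finite A" "v \<in> A" "k \<notin> A"
  shows "efpoly0 (insert k A) = efpoly0 A * ediff v k"
proof -
  have "efpoly0 A * ediff v k = efpoly0 A * edens k + efpoly0 A * edens v - efpoly0 A * epair k v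
      - efpoly0 A * epair v k"
    by (simp add: ediff_def algebra_simps)
  also have "\<dots> = efpoly0 (insert k A)"
    unfolding efpoly0_mult_edens_new[OF assms(1,3)] efpoly0_mult_edens_mem[OF assms(1,2)]
      efpoly0_mult_epair_col_mem[OF assms(1,2)] efpoly0_mult_epair_row_mem[OF assms(1,2)]
      efpoly0_insert_expand[OF assms(1,3)]
    by (simp add: algebra_simps)
  finally show ?thesis by simp
qed

lemma efpoly0_singleton: "efpoly0 {v} = 1"
  by (simp add: efpoly0_def etau_empty)

lemma efpoly_singleton: "efpoly lam {i} = 1"
  by (simp add: efpoly_def efpoly0_singleton escal_zero)

lemma efpoly0_eq_ediff_prod: "finite A \<Longrightarrow> v \<in> A \<Longrightarrow> efpoly0 A = ediff_prod v A"
proof -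
  have "finite B \<Longrightarrow> v \<notin> B \<Longrightarrow> efpoly0 (insert v B) = (\<Prod>i\<in>B. ediff v i)" for B
  proof (induction B rule: finite_induct)
    case empty thus ?case by (simp add: efpoly0_singleton)
  next
    case (insert k B)
    have "efpoly0 (insert v (insert k B)) = efpoly0 (insert k (insert v B))"
      by (simp add: insert_commute)
    also have "\<dots> = efpoly0 (insert v B) * ediff v k" using insert by (intro efpoly0_insert) auto
    finally show ?case using insert by (simp add: mult.commute)
  qed
  moreover assume "finite A" "v \<in> A"
  ultimately show ?thesis
    unfolding ediff_prod_def by (metis finite_Diff insert_Diff Diff_iff singletonI)
qed

lemma efpoly_eq_ediff_prod:
  "finite A \<Longrightarrow> v \<in> A \<Longrightarrow>
     efpoly lam A = escal (lam * (1 - of_nat (card A))) * etau A + ediff_prod v A"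
  by (simp add: efpoly_def efpoly0_eq_ediff_prod)

lemma edens_mult_ediff: "edens v * ediff v i = edens v * edens i"
  by (simp add: ediff_def algebra_simps edens_mult_self edens_mult_epair_row edens_mult_epair_col)

lemma edens_mult_prod_ediff: "finite S \<Longrightarrow> edens v * (\<Prod>i\<in>S. ediff v i) = edens v * (\<Prod>i\<in>S. edens i)"
proof (induction S rule: finite_induct)
  case empty thus ?case by simp
next
  case (insert k S)
  have "edens v * (\<Prod>i\<in>insert k S. ediff v i) = (edens v * ediff v k) * (\<Prod>i\<in>S. ediff v i)"
    using insert by (simp add: mult_ac)
  also have "\<dots> = edens k * (edens v * (\<Prod>i\<in>S. ediff v i))" by (simp add: edens_mult_ediff mult_ac)
  also have "\<dots> = edens v * (\<Prod>i\<in>insert k S. edens i)" using insert by (simp add: mult_ac)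
  finally show ?case .
qed

lemma edens_mult_ediff_prod: "finite B \<Longrightarrow> edens v * ediff_prod v B = edens v * etau (B - {v})"
  by (simp add: ediff_prod_def etau_def edens_mult_prod_ediff)

lemma square_eq_zero_of_products:
  fixes a b c d :: "'a::comm_ring_1"
  assumes "a * a = 0" "b * b = 0" "c * c = 0" "d * d = 0"
    and "a * c = 0" "a * d = 0" "b * c = 0" "b * d = 0" and "c * d = - (a * b)"
  shows "(a + b - c - d) * (a + b - c - d) = 0"
proof -
  have "(a + b - c - d) * (a + b - c - d)
      = a*a + b*b + c*c + d*d + 2*(a*b) - 2*(a*c) - 2*(a*d) - 2*(b*c) - 2*(b*d) + 2*(c*d)"
    by (simp add: algebra_simps)
  thus ?thesis using assms by simp
qed

lemma ediff_mult_self: "ediff v i * ediff v i = 0"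
  unfolding ediff_def
  by (rule square_eq_zero_of_products) (simp_all add: edens_mult_self edens_mult_epair_row
      edens_mult_epair_col epair_mult_same_row epair_mult_same_col epair_exchange[of i v v i]
          edens_def)

lemma ediff_mult_self_left: "ediff v i * (ediff v i * z) = 0"
  by (simp add: mult.assoc[symmetric] ediff_mult_self)

lemma etau_mult_ediff_prod:
  assumes "finite A" "finite B" "A \<inter> B = {v}"
  shows "etau A * ediff_prod v B = etau (A \<union> B)"
proof -
  have v: "v \<in> A" "v \<in> B" using assms by auto
  have "etau A * ediff_prod v B = etau (A - {v}) * (edens v * ediff_prod v B)"
    using assms v by (simp add: etau_remove[of A v] mult_ac)
  also have "\<dots> = etau (A - {v}) * etau B"
    using assms v by (simp add: edens_mult_ediff_prod etau_remove[of B v, symmetric])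
  also have "\<dots> = etau ((A - {v}) \<union> B)"
    using assms by (subst etau_union) auto
  also have "(A - {v}) \<union> B = A \<union> B" using v by auto
  finally show ?thesis .
qed

lemma efpoly_mult_Int_singleton:
  fixes A B :: "'v::linorder set"
  assumes "finite A" "finite B" "A \<inter> B = {v}"
  shows "efpoly lam A * efpoly lam B = efpoly lam (A \<union> B)"
proof -
  have v: "v \<in> A" "v \<in> B" using assms by auto
  define a where "a = (escal (lam * (1 - of_nat (card A))) :: 'v egr)"
  define b where "b = (escal (lam * (1 - of_nat (card B))) :: 'v egr)"
  have tau_tau: "etau A * etau B = 0"
    using assms v by (simp add: etau_remove[of A v] etau_remove[of B v] mult_ac edens_mult_self
        edens_mult_self_left)
  have tau_diff: "etau A * ediff_prod v B = etau (A \<union> B)" by (rule etau_mult_ediff_prod[OF assms])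
  have diff_tau: "ediff_prod v A * etau B = etau (A \<union> B)"
    using etau_mult_ediff_prod[of B A v] assms by (simp add: Int_commute Un_commute mult.commute)
  have diff_diff: "ediff_prod v A * ediff_prod v B = ediff_prod v (A \<union> B)"
  proof -
    have "(A \<union> B) - {v} = (A - {v}) \<union> (B - {v})" by auto
    moreover have "(A - {v}) \<inter> (B - {v}) = {}" using assms by auto
    ultimately show ?thesis using assms by (simp add: ediff_prod_def prod.union_disjoint)
  qed
  have cd: "card A + card B = card (A \<union> B) + 1"
    using card_Un_Int[OF assms(1,2)] assms(3) by simp
  have ab: "a + b = escal (lam * (1 - of_nat (card (A \<union> B))))"
  proof -
    have "lam * (1 - of_nat (card A)) + lam * (1 - of_nat (card B))
        = lam * (1 - of_nat (card (A \<union> B)))"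
    proof -
      have "(of_nat (card A) :: complex) + of_nat (card B) = of_nat (card (A \<union> B)) + 1"
        using cd by (metis of_nat_1 of_nat_add)
      hence "lam * (of_nat (card A) + of_nat (card B)) = lam * (of_nat (card (A \<union> B)) + 1)" by simp
      thus ?thesis by (simp add: algebra_simps)
    qed
    thus ?thesis unfolding a_def b_def by (simp flip: escal_add)
  qed
  have "efpoly lam A * efpoly lam B = (a * etau A + ediff_prod v A) * (b * etau B + ediff_prod v B)"
    using assms v by (simp add: efpoly_eq_ediff_prod[of A v] efpoly_eq_ediff_prod[of B v] a_def
        b_def)
  also have "\<dots> = a * b * (etau A * etau B) + a * (etau A * ediff_prod v B)
      + b * (ediff_prod v A * etau B) + ediff_prod v A * ediff_prod v B"
    by (simp add: algebra_simps)
  also have "\<dots> = (a + b) * etau (A \<union> B) + ediff_prod v (A \<union> B)"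
    unfolding tau_tau tau_diff diff_tau diff_diff by (simp add: algebra_simps)
  also have "\<dots> = efpoly lam (A \<union> B)"
    using assms v by (simp add: ab efpoly_eq_ediff_prod[of "A \<union> B" v])
  finally show ?thesis .
qed

lemma efpoly_mult_two_common:
  fixes A B :: "'v::linorder set"
  assumes "finite A" "finite B" "u \<noteq> v" "u \<in> A" "u \<in> B" "v \<in> A" "v \<in> B"
  shows "efpoly lam A * efpoly lam B = 0"
proof -
  define a where "a = (escal (lam * (1 - of_nat (card A))) :: 'v egr)"
  define b where "b = (escal (lam * (1 - of_nat (card B))) :: 'v egr)"
  have tau_tau: "etau A * etau B = 0"
    using assms by (simp add: etau_remove[of A v] etau_remove[of B v] mult_ac edens_mult_self
        edens_mult_self_left)
  have tau_diff_gen: "etau A' * ediff_prod v B' = 0" if "finite A'" "finite B'" "u \<in> A'" "u \<in> B'" "v \<in> A'"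
      for A' B'
  proof -
    have "etau A' * ediff_prod v B' = etau (A' - {v}) * (edens v * ediff_prod v B')"
      using that by (simp add: etau_remove[of A' v] mult_ac)
    also have "\<dots> = etau (A' - {v}) * (edens v * etau (B' - {v}))" using that
      by (simp add: edens_mult_ediff_prod)
    also have "\<dots> = (edens u * edens u) * (etau (A' - {v} - {u}) * edens v * etau (B' - {v} - {u}))"
      using that assms(3) by (simp add: etau_remove[of "A' - {v}" u] etau_remove[of "B' - {v}" u]
          mult_ac)
    also have "\<dots> = 0" by (simp add: edens_mult_self)
    finally show ?thesis .
  qed
  have tau_diff: "etau A * ediff_prod v B = 0" using assms by (intro tau_diff_gen) auto
  have diff_tau: "ediff_prod v A * etau B = 0" using assms tau_diff_gen[of B A] by (simp add: mult.commute)
  have diff_diff: "ediff_prod v A * ediff_prod v B = 0"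
  proof -
    have "ediff_prod v A = ediff v u * (\<Prod>i\<in>A - {v} - {u}. ediff v i)"
      "ediff_prod v B = ediff v u * (\<Prod>i\<in>B - {v} - {u}. ediff v i)"
      using assms by (simp_all add: ediff_prod_def prod.remove)
    thus ?thesis by (simp add: mult_ac ediff_mult_self_left)
  qed
  have "efpoly lam A * efpoly lam B = (a * etau A + ediff_prod v A) * (b * etau B + ediff_prod v B)"
    using assms by (simp add: efpoly_eq_ediff_prod[of A v] efpoly_eq_ediff_prod[of B v] a_def b_def)
  also have "\<dots> = a * b * (etau A * etau B) + a * (etau A * ediff_prod v B)
      + b * (ediff_prod v A * etau B) + ediff_prod v A * ediff_prod v B"
    by (simp add: algebra_simps)
  also have "\<dots> = 0" by (simp add: tau_tau tau_diff diff_tau diff_diff)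
  finally show ?thesis .
qed

lemma card_ge_2_obtain:
  assumes "2 \<le> card B"
  obtains u v where "u \<in> B" "v \<in> B" "u \<noteq> v"
proof -
  have "finite B" "B \<noteq> {}" using assms by (auto intro: card_ge_0_finite)
  then obtain u where u: "u \<in> B" by auto
  have "card (B - {u}) \<ge> 1" using assms u \<open>finite B\<close> by simp
  then obtain v where "v \<in> B - {u}" by (metis card.empty ex_in_conv not_one_le_zero)
  thus ?thesis using that u by auto
qed

lemma efpoly_mult_self: "finite A \<Longrightarrow> 2 \<le> card A \<Longrightarrow> efpoly lam A * efpoly lam A = 0"
  by (metis card_ge_2_obtain efpoly_mult_two_common)

lemma efpoly_mult_edens:
  assumes "finite T" "i \<in> T"
  shows "efpoly lam T * edens i = etau T"
proof -
  have "efpoly lam T * edens i = escal (lam * (1 - of_nat (card T))) * (etau T * edens i)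
      + edens i * ediff_prod i T"
    using assms by (simp add: efpoly_eq_ediff_prod[of T i] algebra_simps)
  also have "\<dots> = edens i * etau (T - {i})" using assms
    by (simp add: etau_mult_edens edens_mult_ediff_prod)
  also have "\<dots> = etau T" using assms by (simp add: etau_remove[of T i])
  finally show ?thesis .
qed

lemma efpoly_mult_prod_subset:
  assumes "finite T" "S \<subseteq> T"
  shows "efpoly lam T * (\<Prod>i\<in>S. 1 + escal lam * edens i)
      = efpoly lam T + escal (lam * of_nat (card S)) * etau T"
proof -
  have "finite S" using assms finite_subset by auto
  thus ?thesis using assms(2)
  proof (induction S rule: finite_induct)
    case empty thus ?case by (simp add: escal_zero)
  next
    case (insert k S)
    have k: "k \<in> T" using insert by auto
    have "efpoly lam T * (\<Prod>i\<in>insert k S. 1 + escal lam * edens i)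
        = (efpoly lam T * (\<Prod>i\<in>S. 1 + escal lam * edens i)) * (1 + escal lam * edens k)"
      using insert(1,2) by (simp add: mult_ac)
    also have "\<dots> = (efpoly lam T + escal (lam * of_nat (card S)) * etau T)
        * (1 + escal lam * edens k)"
    proof -
      have ih: "efpoly lam T * (\<Prod>i\<in>S. 1 + escal lam * edens i)
          = efpoly lam T + escal (lam * of_nat (card S)) * etau T"
        using insert by auto
      show ?thesis by (simp only: ih)
    qed
    also have "\<dots> = efpoly lam T + escal (lam * of_nat (card S)) * etau T
        + escal lam * (efpoly lam T * edens k)
            + escal (lam * of_nat (card S)) * escal lam * (etau T * edens k)"
      by (simp add: algebra_simps)
    also have "\<dots> = efpoly lam T + escal (lam * of_nat (card S)) * etau T + escal lam * etau T
        + escal (lam * of_nat (card S)) * escal lam * 0"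
      by (simp only: efpoly_mult_edens[OF assms(1) k] etau_mult_edens[OF assms(1) k])
    also have "\<dots> = efpoly lam T + (escal (lam * of_nat (card S)) + escal lam) * etau T"
      by (simp add: algebra_simps)
    also have "escal (lam * of_nat (card S)) + escal lam = escal (lam * of_nat (card (insert k S)))"
      using insert by (simp add: escal_add[symmetric] algebra_simps)
    finally show ?case .
  qed
qed

lemma efpoly_mult_prod_all:
  assumes "finite T" "v \<in> T"
  shows "efpoly lam T * (\<Prod>i\<in>T. 1 + escal lam * edens i) = escal lam * etau T + ediff_prod v T"
proof -
  have "efpoly lam T * (\<Prod>i\<in>T. 1 + escal lam * edens i)
      = efpoly lam T + escal (lam * of_nat (card T)) * etau T"
    using assms by (intro efpoly_mult_prod_subset) auto
  also have "\<dots> = (escal (lam * (1 - of_nat (card T))) + escal (lam * of_nat (card T))) * etau T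
      + ediff_prod v T"
    using assms by (simp add: efpoly_eq_ediff_prod[of T v] algebra_simps)
  also have "escal (lam * (1 - of_nat (card T))) + escal (lam * of_nat (card T)) = escal lam"
    by (simp add: escal_add[symmetric] algebra_simps)
  finally show ?thesis .
qed

section \<open>Support and degree\<close>

definition supported_on :: "('v \<times> bool) set \<Rightarrow> 'v::linorder egr \<Rightarrow> bool" where
  "supported_on X a \<longleftrightarrow> (\<forall>U. gr_of a U \<noteq> 0 \<longrightarrow> U \<subseteq> X)"

definition degree_ge :: "nat \<Rightarrow> 'v::linorder egr \<Rightarrow> bool" where
  "degree_ge d a \<longleftrightarrow> (\<forall>U. gr_of a U \<noteq> 0 \<longrightarrow> d \<le> card U)"

definition homogeneous :: "nat \<Rightarrow> 'v::linorder egr \<Rightarrow> bool" where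
  "homogeneous d a \<longleftrightarrow> (\<forall>U. gr_of a U \<noteq> 0 \<longrightarrow> card U = d)"

lemma gr_of_mult_nonzeroE:
  assumes "gr_of (a * b) U \<noteq> 0"
  obtains S where "S \<subseteq> U" "finite U" "gr_of a S \<noteq> 0" "gr_of b (U - S) \<noteq> 0"
proof -
  have fin: "finite U" using assms gr_of_nonzero_finite by blast
  from assms obtain S where "S \<in> Pow U" "gsign S (U - S) * gr_of a S * gr_of b (U - S) \<noteq> 0"
    unfolding gr_of_mult gmul_def by (meson sum.neutral)
  thus ?thesis using that fin by auto
qed

lemma supported_on_times:
  assumes "supported_on X a" "supported_on X2 b" shows "supported_on (X \<union> X2) (a * b)"
  unfolding supported_on_def
proof (intro allI impI)
  fix U assume "gr_of (a * b) U \<noteq> 0"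
  then obtain S where "S \<subseteq> U" "gr_of a S \<noteq> 0" "gr_of b (U - S) \<noteq> 0" by (rule gr_of_mult_nonzeroE)
  hence "S \<subseteq> X" "U - S \<subseteq> X2" using assms unfolding supported_on_def by auto
  thus "U \<subseteq> X \<union> X2" by blast
qed

lemma homogeneous_times:
  assumes "homogeneous m a" "homogeneous n b" shows "homogeneous (m + n) (a * b)"
  unfolding homogeneous_def
proof (intro allI impI)
  fix U assume "gr_of (a * b) U \<noteq> 0"
  then obtain S where "S \<subseteq> U" "finite U" "gr_of a S \<noteq> 0" "gr_of b (U - S) \<noteq> 0"
    by (rule gr_of_mult_nonzeroE)
  moreover hence "card S = m" "card (U - S) = n" using assms unfolding homogeneous_def by auto
  ultimately show "card U = m + n" using card_eq_card_add_card_Diff by metis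
qed

lemma degree_ge_times:
  assumes "degree_ge m a" "degree_ge n b" shows "degree_ge (m + n) (a * b)"
  unfolding degree_ge_def
proof (intro allI impI)
  fix U assume "gr_of (a * b) U \<noteq> 0"
  then obtain S where "S \<subseteq> U" "finite U" "gr_of a S \<noteq> 0" "gr_of b (U - S) \<noteq> 0"
    by (rule gr_of_mult_nonzeroE)
  moreover hence "m \<le> card S" "n \<le> card (U - S)" using assms unfolding degree_ge_def by auto
  ultimately show "m + n \<le> card U" using card_eq_card_add_card_Diff by (metis add_le_mono)
qed

lemma gr_of_add_nonzero: "gr_of (a + b) U \<noteq> 0 \<Longrightarrow> gr_of a U \<noteq> 0 \<or> gr_of b U \<noteq> 0"
  by (auto simp: gr_of_add gadd_def)

lemma supported_on_plus: "supported_on X a \<Longrightarrow> supported_on X b \<Longrightarrow> supported_on X (a + b)"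
  unfolding supported_on_def using gr_of_add_nonzero by blast
lemma homogeneous_plus: "homogeneous d a \<Longrightarrow> homogeneous d b \<Longrightarrow> homogeneous d (a + b)"
  unfolding homogeneous_def using gr_of_add_nonzero by blast
lemma degree_ge_plus: "degree_ge d a \<Longrightarrow> degree_ge d b \<Longrightarrow> degree_ge d (a + b)"
  unfolding degree_ge_def using gr_of_add_nonzero by blast

lemma supported_on_uminus: "supported_on X a \<Longrightarrow> supported_on X (- a)"
  unfolding supported_on_def gr_of_uminus by simp
lemma homogeneous_uminus: "homogeneous d a \<Longrightarrow> homogeneous d (- a)"
  unfolding homogeneous_def gr_of_uminus by simp
lemma supported_on_minus: "supported_on X a \<Longrightarrow> supported_on X b \<Longrightarrow> supported_on X (a - b)"
  unfolding diff_conv_add_uminus by (intro supported_on_plus supported_on_uminus)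
lemma homogeneous_minus: "homogeneous d a \<Longrightarrow> homogeneous d b \<Longrightarrow> homogeneous d (a - b)"
  unfolding diff_conv_add_uminus by (intro homogeneous_plus homogeneous_uminus)

lemma supported_on_escal: "supported_on X a \<Longrightarrow> supported_on X (escal c * a)"
  unfolding supported_on_def gr_of_escal_mult gsmult_def by simp
lemma degree_ge_escal: "degree_ge d a \<Longrightarrow> degree_ge d (escal c * a)"
  unfolding degree_ge_def gr_of_escal_mult gsmult_def by simp

lemma supported_on_one: "supported_on X 1"
  unfolding supported_on_def gr_of_one gone_def gscalar_def by auto
lemma homogeneous_one: "homogeneous 0 1"
  unfolding homogeneous_def gr_of_one gone_def gscalar_def by auto

lemma supported_on_mono: "supported_on X a \<Longrightarrow> X \<subseteq> X2 \<Longrightarrow> supported_on X2 a"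
  unfolding supported_on_def by blast
lemma homogeneous_imp_degree_ge: "homogeneous d a \<Longrightarrow> degree_ge d a"
  unfolding homogeneous_def degree_ge_def by simp
lemma degree_ge_mono: "degree_ge d a \<Longrightarrow> d' \<le> d \<Longrightarrow> degree_ge d' a"
  unfolding degree_ge_def by force

lemma supported_on_prod: "finite I \<Longrightarrow> (\<And>i. i \<in> I \<Longrightarrow> supported_on X (f i))
    \<Longrightarrow> supported_on X (\<Prod>i\<in>I. f i)"
proof (induction I rule: finite_induct)
  case empty thus ?case by (simp add: supported_on_one)
next
  case (insert k I)
  have "supported_on (X \<union> X) (f k * (\<Prod>i\<in>I. f i))" by (rule supported_on_times) (use insert in auto)
  thus ?case using insert by simp
qed

lemma homogeneous_prod: "finite I \<Longrightarrow> (\<And>i. i \<in> I \<Longrightarrow> homogeneous d (f i))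
    \<Longrightarrow> homogeneous (d * card I) (\<Prod>i\<in>I. f i)"
proof (induction I rule: finite_induct)
  case empty thus ?case by (simp add: homogeneous_one)
next
  case (insert k I)
  hence "homogeneous (d + d * card I) (f k * (\<Prod>i\<in>I. f i))" by (intro homogeneous_times) auto
  thus ?case using insert by simp
qed

lemma degree_ge_power: "degree_ge d a \<Longrightarrow> degree_ge (n * d) (a ^ n)"
proof (induction n)
  case 0 thus ?case by (simp add: degree_ge_def)
next
  case (Suc n) thus ?case using degree_ge_times[of d a "n * d" "a ^ n"] by (simp add: add.commute)
qed

lemma degree_ge_sum: "finite I \<Longrightarrow> (\<And>i. i \<in> I \<Longrightarrow> degree_ge d (f i)) \<Longrightarrow> degree_ge d (\<Sum>i\<in>I. f i)"
proof (induction I rule: finite_induct)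
  case empty thus ?case by (simp add: degree_ge_def gr_of_zero)
next
  case (insert k I)
  have "degree_ge d (f k + (\<Sum>i\<in>I. f i))" by (rule degree_ge_plus) (use insert in auto)
  thus ?case using insert by simp
qed

lemma supported_on_sum: "finite I \<Longrightarrow> (\<And>i. i \<in> I \<Longrightarrow> supported_on X (f i)) \<Longrightarrow> supported_on X (\<Sum>i\<in>I. f i)"
proof (induction I rule: finite_induct)
  case empty thus ?case by (simp add: supported_on_def gr_of_zero)
next
  case (insert k I)
  have "supported_on X (f k + (\<Sum>i\<in>I. f i))" by (rule supported_on_plus) (use insert in auto)
  thus ?case using insert by simp
qed

lemma supported_on_power: "supported_on X a \<Longrightarrow> supported_on X (a ^ n)"
proof (induction n)
  case 0 thus ?case by (simp add: supported_on_one)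
next
  case (Suc n)
  have "supported_on (X \<union> X) (a * a ^ n)" by (rule supported_on_times) (use Suc in auto)
  thus ?case by simp
qed


lemma egr_eq_zero_by_degree:
  assumes "supported_on X a" "degree_ge d a" "finite X" "card X < d"
  shows "a = 0"
proof (rule egr_eqI)
  fix U
  show "gr_of a U = gr_of 0 U"
  proof (rule ccontr)
    assume "gr_of a U \<noteq> gr_of 0 U"
    hence "gr_of a U \<noteq> 0" by (simp add: gr_of_zero)
    hence "U \<subseteq> X" "d \<le> card U" using assms unfolding supported_on_def degree_ge_def by auto
    moreover have "card U \<le> card X" using assms(3) \<open>U \<subseteq> X\<close> by (rule card_mono)
    ultimately show False using assms(4) by linarith
  qed
qed

lemma supported_on_epair: "supported_on ({i, j} \<times> UNIV) (epair i j)"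
  unfolding supported_on_def gr_of_epair_eq by auto

lemma homogeneous_epair: "homogeneous 2 (epair i j)"
  unfolding homogeneous_def gr_of_epair_eq by auto

lemma supported_on_edens: "supported_on ({i} \<times> UNIV) (edens i)"
  using supported_on_epair[of i i] by (simp add: edens_def)

lemma homogeneous_edens: "homogeneous 2 (edens i)" by (simp add: edens_def homogeneous_epair)

lemma homogeneous_ediff: "homogeneous 2 (ediff v i)"
  by (simp add: ediff_def homogeneous_edens homogeneous_epair homogeneous_plus homogeneous_minus)

lemma supported_on_ediff: "supported_on ({i, v} \<times> UNIV) (ediff v i)"
  unfolding ediff_def
  by (intro supported_on_minus supported_on_plus; rule supported_on_mono[OF supported_on_edens]
      supported_on_mono[OF supported_on_epair]) auto

lemma supported_on_etau: "finite T \<Longrightarrow> supported_on (T \<times> UNIV) (etau T)"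
  unfolding etau_def by (intro supported_on_prod)
      (auto intro: supported_on_mono[OF supported_on_edens])

lemma supported_on_ediff_prod: "finite T \<Longrightarrow> v \<in> T \<Longrightarrow> supported_on (T \<times> UNIV) (ediff_prod v T)"
  unfolding ediff_prod_def by (intro supported_on_prod)
      (auto intro: supported_on_mono[OF supported_on_ediff])

lemma homogeneous_ediff_prod: "finite T \<Longrightarrow> homogeneous (2 * card (T - {v})) (ediff_prod v T)"
  unfolding ediff_prod_def by (intro homogeneous_prod homogeneous_ediff) auto

lemma homogeneous_etau: "finite T \<Longrightarrow> homogeneous (2 * card T) (etau T)"
  unfolding etau_def by (intro homogeneous_prod homogeneous_edens) auto

lemma efpoly_degree_support:
  fixes A :: "'v::linorder set"
  assumes "finite A" "2 \<le> card A"
  shows "degree_ge 2 (efpoly lam A) \<and> supported_on (A \<times> UNIV) (efpoly lam A)"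
proof -
  obtain v where v: "v \<in> A" using assms by (metis card_ge_2_obtain)
  have eq: "efpoly lam A = escal (lam * (1 - of_nat (card A))) * etau A + ediff_prod v A"
    using efpoly_eq_ediff_prod[OF assms(1) v] .
  have "degree_ge (2 * card A) (etau A)" using homogeneous_etau[OF assms(1)]
    by (rule homogeneous_imp_degree_ge)
  hence l1: "degree_ge 2 (etau A)" by (rule degree_ge_mono) (use assms in simp)
  have "card (A - {v}) \<ge> 1" using assms v by simp
  hence l2: "degree_ge 2 (ediff_prod v A)"
    using homogeneous_imp_degree_ge[OF homogeneous_ediff_prod[OF assms(1), of v]] degree_ge_mono
      by fastforce
  have "degree_ge 2 (efpoly lam A)" unfolding eq by (intro degree_ge_plus degree_ge_escal l1 l2)
  moreover have "supported_on (A \<times> UNIV) (efpoly lam A)" unfolding eq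
    by (intro supported_on_plus supported_on_escal supported_on_etau supported_on_ediff_prod
        assms(1) v)
  ultimately show ?thesis by simp
qed

lemma gsign_blocks:
  fixes A B :: "'a::linorder set"
  assumes "A \<inter> B = {}"
  shows "gsign (A \<times> (UNIV :: bool set)) (B \<times> UNIV) = 1"
proof -
  let ?A = "A \<times> (UNIV :: bool set)" and ?B = "B \<times> (UNIV :: bool set)"
  define I where "I = {(a, b). a \<in> A \<and> b \<in> B \<and> b < a}"
  define h :: "('a \<times> 'a) \<times> (bool \<times> bool) \<Rightarrow> ('a \<times> bool) \<times> ('a \<times> bool)"
    where "h = (\<lambda>((a, b), (s, t)). ((a, s), (b, t)))"
  have "inversions ?A ?B = h ` (I \<times> UNIV)"
  proof (rule set_eqI)
    fix p
    show "p \<in> inversions ?A ?B \<longleftrightarrow> p \<in> h ` (I \<times> UNIV)"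
    proof
      assume "p \<in> inversions ?A ?B"
      then obtain a s b t where p: "p = ((a, s), (b, t))" "a \<in> A" "b \<in> B" "(b, t) < (a, s)"
        unfolding inversions_def by auto
      have "a \<noteq> b" using p assms by auto
      hence "b < a" using p(4) by (auto simp: less_prod_def)
      hence "((a, b), (s, t)) \<in> I \<times> UNIV" using p by (auto simp: I_def)
      thus "p \<in> h ` (I \<times> UNIV)" unfolding p(1)
        by (rule image_eqI[rotated]) (simp add: h_def)
    next
      assume "p \<in> h ` (I \<times> UNIV)"
      then obtain a b s t where "p = ((a, s), (b, t))" "a \<in> A" "b \<in> B" "b < a"
        unfolding h_def I_def by auto
      thus "p \<in> inversions ?A ?B" by (auto simp: inversions_def less_prod_def)
    qed
  qed
  moreover have "inj_on h (I \<times> UNIV)" unfolding h_def inj_on_def by auto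
  moreover have "card (UNIV :: (bool \<times> bool) set) = 4"
    by (simp add: UNIV_Times_UNIV[symmetric] card_cartesian_product card_UNIV_bool del:
        UNIV_Times_UNIV)
  ultimately have "card (inversions ?A ?B) = card I * 4"
    by (simp add: card_image card_cartesian_product)
  thus ?thesis by (simp add: gsign_eq_inversions)
qed

lemma gr_of_mult_top:
  assumes "supported_on (A \<times> UNIV) a" "supported_on (B \<times> UNIV) b" "A \<inter> B = {}" "finite A" "finite B"
  shows "gr_of (a * b) ((A \<union> B) \<times> UNIV) = gr_of a (A \<times> UNIV) * gr_of b (B \<times> UNIV)"
proof -
  let ?U = "(A \<union> B) \<times> (UNIV :: bool set)"
  have finU: "finite ?U" using assms by auto
  have z: "gsign S (?U - S) * gr_of a S * gr_of b (?U - S) = 0" if "S \<in> Pow ?U" "S \<noteq> A \<times> UNIV" for S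
  proof (rule ccontr)
    assume "gsign S (?U - S) * gr_of a S * gr_of b (?U - S) \<noteq> 0"
    hence "S \<subseteq> A \<times> UNIV" "?U - S \<subseteq> B \<times> UNIV" using assms(1,2) unfolding supported_on_def by auto
    hence "S = A \<times> UNIV" using assms(3) by blast
    thus False using that by simp
  qed
  have "gr_of (a * b) ?U = (\<Sum>S\<in>Pow ?U. gsign S (?U - S) * gr_of a S * gr_of b (?U - S))"
    by (simp add: gr_of_mult gmul_def)
  also have "\<dots> = gsign (A \<times> UNIV) (?U - A \<times> UNIV) * gr_of a (A \<times> UNIV) * gr_of b (?U - A \<times> UNIV)
      + (\<Sum>S\<in>Pow ?U - {A \<times> UNIV}. gsign S (?U - S) * gr_of a S * gr_of b (?U - S))"
    by (rule sum.remove) (use finU in auto)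
  also have "(\<Sum>S\<in>Pow ?U - {A \<times> UNIV}. gsign S (?U - S) * gr_of a S * gr_of b (?U - S)) = 0"
    by (rule sum.neutral) (use z in blast)
  also have "?U - A \<times> UNIV = B \<times> UNIV" using assms(3) by auto
  finally show ?thesis using gsign_blocks[OF assms(3)] by simp
qed

lemma gr_of_prod_top:
  assumes "finite P" "\<forall>T\<in>P. finite T" "\<forall>A\<in>P. \<forall>B\<in>P. A \<noteq> B \<longrightarrow> A \<inter> B = {}"
    "\<And>T. T \<in> P \<Longrightarrow> supported_on (T \<times> UNIV) (g T)"
  shows "gr_of (\<Prod>T\<in>P. g T) (\<Union>P \<times> UNIV) = (\<Prod>T\<in>P. gr_of (g T) (T \<times> UNIV))
     \<and> supported_on (\<Union>P \<times> UNIV) (\<Prod>T\<in>P. g T)"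
  using assms
proof (induction P rule: finite_induct)
  case empty
  have "gr_of 1 {} = 1" by (simp add: gr_of_one gone_def gscalar_def)
  thus ?case by (simp add: supported_on_one)
next
  case (insert T P)
  have IH: "gr_of (\<Prod>T\<in>P. g T) (\<Union>P \<times> UNIV) = (\<Prod>T\<in>P. gr_of (g T) (T \<times> UNIV))"
    "supported_on (\<Union>P \<times> UNIV) (\<Prod>T\<in>P. g T)" using insert by auto
  have d: "T \<inter> \<Union>P = {}" using insert by auto
  have fT: "finite T" "finite (\<Union>P)" using insert by auto
  have sT: "supported_on (T \<times> UNIV) (g T)" using insert by auto
  have "gr_of (\<Prod>T\<in>insert T P. g T) (\<Union>(insert T P) \<times> UNIV)
      = gr_of (g T * (\<Prod>T\<in>P. g T)) ((T \<union> \<Union>P) \<times> UNIV)"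
    using insert by simp
  also have "\<dots> = gr_of (g T) (T \<times> UNIV) * gr_of (\<Prod>T\<in>P. g T) (\<Union>P \<times> UNIV)"
    by (rule gr_of_mult_top[OF sT IH(2) d fT])
  finally have top: "gr_of (\<Prod>T\<in>insert T P. g T) (\<Union>(insert T P) \<times> UNIV)
      = (\<Prod>T\<in>insert T P. gr_of (g T) (T \<times> UNIV))"
    using insert IH by simp
  have "supported_on ((T \<times> UNIV) \<union> (\<Union>P \<times> UNIV)) (g T * (\<Prod>T\<in>P. g T))"
    by (rule supported_on_times[OF sT IH(2)])
  hence supp: "supported_on (\<Union>(insert T P) \<times> UNIV) (\<Prod>T\<in>insert T P. g T)"
    using insert by (simp add: Sigma_Un_distrib1)
  show ?case using top supp by blast
qed

lemma gr_of_edens_top: "gr_of (edens i) ({i} \<times> UNIV) = -1"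
proof -
  have "{i} \<times> (UNIV :: bool set) = {(i, True), (i, False)}" by auto
  thus ?thesis by (simp add: edens_def gr_of_epair_eq)
qed

lemma gr_of_etau_top: "finite T \<Longrightarrow> gr_of (etau T) (T \<times> UNIV) = (-1) ^ card T"
proof (induction T rule: finite_induct)
  case empty thus ?case by (simp add: etau_empty gr_of_one gone_def gscalar_def)
next
  case (insert k T)
  have "gr_of (etau (insert k T)) (insert k T \<times> UNIV) = gr_of (edens k * etau T) (({k} \<union> T) \<times> UNIV)"
    using insert by (simp add: etau_insert)
  also have "\<dots> = gr_of (edens k) ({k} \<times> UNIV) * gr_of (etau T) (T \<times> UNIV)"
    using insert by (intro gr_of_mult_top supported_on_edens supported_on_etau) auto
  finally show ?case using insert by (simp add: gr_of_edens_top)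
qed

lemma gr_of_ediff_prod_top: "finite T \<Longrightarrow> v \<in> T \<Longrightarrow> gr_of (ediff_prod v T) (T \<times> UNIV) = 0"
proof (rule ccontr)
  assume a: "finite T" "v \<in> T" "gr_of (ediff_prod v T) (T \<times> UNIV) \<noteq> 0"
  hence "card (T \<times> (UNIV :: bool set)) = 2 * card (T - {v})"
    using homogeneous_ediff_prod[OF a(1), of v] unfolding homogeneous_def by blast
  moreover have "card (T \<times> (UNIV :: bool set)) = 2 * card T"
    by (simp add: card_cartesian_product card_UNIV_bool)
  moreover have "card (T - {v}) < card T" using a by (meson card_Diff1_less)
  ultimately show False by simp
qed

definition eberezin :: "'v::linorder set \<Rightarrow> 'v egr \<Rightarrow> complex" where
  "eberezin V a = gr_of a (V \<times> UNIV) / gr_of (etau V) (V \<times> UNIV)"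

lemma berezin_gr_of: "finite V \<Longrightarrow> berezin V (gr_of a) = eberezin V a"
  by (simp add: berezin_def eberezin_def tau_eq_gr_of_etau)

lemma eberezin_zero: "eberezin V 0 = 0"
  by (simp add: eberezin_def gr_of_zero)

lemma eberezin_sum: "eberezin V (\<Sum>i\<in>I. f i) = (\<Sum>i\<in>I. eberezin V (f i))"
  by (simp add: eberezin_def gr_of_sum_apply sum_divide_distrib)

lemma eberezin_escal_mult: "eberezin V (escal c * a) = c * eberezin V a"
  by (simp add: eberezin_def gr_of_escal_mult_apply)

text \<open>The top coefficient of \<open>f T * (\<Prod>i\<in>T. 1 + \<lambda> edens i)\<close> is \<open>\<lambda>\<close> times that
  of \<open>etau T\<close>, since the remaining part \<open>ediff_prod v T\<close> has lower degree.\<close>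

lemma eberezin_prod_partition:
  assumes "finite P" "\<forall>T\<in>P. T \<noteq> {} \<and> finite T" "\<forall>A\<in>P. \<forall>B\<in>P. A \<noteq> B \<longrightarrow> A \<inter> B = {}"
  shows "eberezin (\<Union>P) ((\<Prod>T\<in>P. efpoly lam T) * (\<Prod>i\<in>\<Union>P. 1 + escal lam * edens i)) = lam ^ card P"
proof -
  define v where "v T = (SOME v. v \<in> T)" for T :: "'a set"
  have vT: "v T \<in> T" if "T \<in> P" for T using assms that unfolding v_def by (metis some_in_eq)
  define h where "h T = escal lam * etau T + ediff_prod (v T) T" for T
  have "(\<Prod>i\<in>\<Union>P. 1 + escal lam * edens i) = (\<Prod>T\<in>P. \<Prod>i\<in>T. 1 + escal lam * edens i)"
    using assms by (subst prod.Union_disjoint) auto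
  hence "(\<Prod>T\<in>P. efpoly lam T) * (\<Prod>i\<in>\<Union>P. 1 + escal lam * edens i)
      = (\<Prod>T\<in>P. efpoly lam T * (\<Prod>i\<in>T. 1 + escal lam * edens i))"
    by (simp add: prod.distrib)
  also have "\<dots> = (\<Prod>T\<in>P. h T)"
    using assms vT by (intro prod.cong refl) (simp add: h_def efpoly_mult_prod_all)
  finally have integrand: "(\<Prod>T\<in>P. efpoly lam T) * (\<Prod>i\<in>\<Union>P. 1 + escal lam * edens i) = (\<Prod>T\<in>P. h T)" .
  have supp_h: "supported_on (T \<times> UNIV) (h T)" if "T \<in> P" for T
    unfolding h_def using assms that vT
    by (intro supported_on_plus supported_on_escal supported_on_etau supported_on_ediff_prod) auto
  have top_h: "gr_of (h T) (T \<times> UNIV) = lam * (-1) ^ card T" if "T \<in> P" for T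
    unfolding h_def using assms that vT
    by (simp add: gr_of_add gadd_def gr_of_escal_mult gsmult_def gr_of_etau_top
        gr_of_ediff_prod_top)
  have top_integrand: "gr_of (\<Prod>T\<in>P. h T) (\<Union>P \<times> UNIV) = (\<Prod>T\<in>P. lam * (-1) ^ card T)"
  proof -
    have fP: "\<forall>T\<in>P. finite T" using assms by auto
    have "gr_of (\<Prod>T\<in>P. h T) (\<Union>P \<times> UNIV) = (\<Prod>T\<in>P. gr_of (h T) (T \<times> UNIV))"
      using gr_of_prod_top[of P h] assms(1,3) fP supp_h by blast
    also have "\<dots> = (\<Prod>T\<in>P. lam * (-1) ^ card T)" using top_h by (intro prod.cong) auto
    finally show ?thesis .
  qed
  have tau_Union: "etau (\<Union>P) = (\<Prod>T\<in>P. etau T)"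
    unfolding etau_def using assms by (subst prod.Union_disjoint) auto
  have top_tau: "gr_of (etau (\<Union>P)) (\<Union>P \<times> UNIV) = (\<Prod>T\<in>P. (-1) ^ card T)"
  proof -
    have fP: "\<forall>T\<in>P. finite T" using assms by auto
    have "gr_of (\<Prod>T\<in>P. etau T) (\<Union>P \<times> UNIV) = (\<Prod>T\<in>P. gr_of (etau T) (T \<times> UNIV))"
      using gr_of_prod_top[of P etau] assms(1,3) fP supported_on_etau by blast
    also have "\<dots> = (\<Prod>T\<in>P. (-1) ^ card T)" using fP gr_of_etau_top by (intro prod.cong) auto
    finally show ?thesis unfolding tau_Union .
  qed
  have nz: "(\<Prod>T\<in>P. ((-1) ^ card T :: complex)) \<noteq> 0" by (simp add: prod_zero_iff assms)
  show ?thesis unfolding eberezin_def integrand top_integrand top_tau using nz by (simp add: prod.distrib)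
qed

section \<open>Exponential\<close>

definition exp_coeff :: "nat \<Rightarrow> 'v::linorder egr" where "exp_coeff n = escal (1 / of_nat (fact n))"

definition eexp :: "nat \<Rightarrow> 'v::linorder egr \<Rightarrow> 'v egr" where
  "eexp N z = (\<Sum>n\<in>{0..N}. exp_coeff n * z ^ n)"

lemma gexp_gr_of: "gexp V (gr_of z) = gr_of (eexp (2 * card V) z)"
  by (simp add: gexp_def eexp_def exp_coeff_def gr_of_sum gr_of_escal_mult gr_of_power)

lemma power_add_square_zero:
  fixes z u :: "'a::comm_ring_1"
  assumes "u * u = 0"
  shows "(z + u) ^ Suc n = z ^ Suc n + of_nat (Suc n) * (u * z ^ n)"
proof (induction n)
  case 0 thus ?case by simp
next
  case (Suc n)
  have uu: "u * (u * w) = 0" for w using assms by (simp add: mult.assoc[symmetric])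
  have "(z + u) ^ Suc (Suc n) = (z + u) * (z ^ Suc n + of_nat (Suc n) * (u * z ^ n))"
    using Suc by simp
  also have "\<dots> = z ^ Suc (Suc n) + of_nat (Suc n) * (u * z ^ Suc n) + u * z ^ Suc n
       + of_nat (Suc n) * (u * (u * z ^ n))"
    by (simp add: algebra_simps)
  also have "\<dots> = z ^ Suc (Suc n) + of_nat (Suc (Suc n)) * (u * z ^ Suc n)"
    by (simp add: uu algebra_simps)
  finally show ?case .
qed

lemma eexp_Suc: "eexp (Suc N) z = eexp N z + exp_coeff (Suc N) * z ^ Suc N"
  by (simp add: eexp_def atLeast0_atMost_Suc add.commute)

lemma exp_coeff_Suc: "exp_coeff (Suc N) * of_nat (Suc N) = exp_coeff N"
proof -
  have fact_eq: "(of_nat (fact (Suc N)) :: complex) = of_nat (Suc N) * of_nat (fact N)"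
    by (metis fact_Suc of_nat_id of_nat_mult)
  have n1: "(of_nat (Suc N) :: complex) \<noteq> 0" by (simp only: of_nat_eq_0_iff)
  have n2: "(of_nat (fact N) :: complex) \<noteq> 0" by (simp only: of_nat_eq_0_iff) simp
  have "(1 / of_nat (fact (Suc N)) :: complex) * of_nat (Suc N) = 1 / of_nat (fact N)"
    unfolding fact_eq using n1 n2 by (simp add: divide_simps)
  thus ?thesis unfolding exp_coeff_def by (metis escal_mult escal_of_nat)
qed

lemma eexp_add_square_zero_exact:
  fixes u z :: "'v::linorder egr"
  assumes "u * u = 0"
  shows "eexp N (z + u) = eexp N z + u * (eexp N z - exp_coeff N * z ^ N)"
proof (induction N)
  case 0 thus ?case by (simp add: eexp_def exp_coeff_def escal_one)
next
  case (Suc N)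
  have "eexp (Suc N) (z + u) = eexp N (z + u) + exp_coeff (Suc N) * (z + u) ^ Suc N"
    by (rule eexp_Suc)
  also have "\<dots> = eexp N z + u * (eexp N z - exp_coeff N * z ^ N)
     + exp_coeff (Suc N) * (z ^ Suc N + of_nat (Suc N) * (u * z ^ N))"
    by (simp only: Suc power_add_square_zero[OF assms])
  also have "\<dots> = eexp N z + exp_coeff (Suc N) * z ^ Suc N + u * eexp N z
     + u * z ^ N * (exp_coeff (Suc N) * of_nat (Suc N) - exp_coeff N)"
    by (simp add: algebra_simps)
  also have "\<dots> = eexp (Suc N) z + u * eexp N z"
    by (simp only: exp_coeff_Suc eexp_Suc diff_self mult_zero_right add_0_right)
  also have "\<dots> = eexp (Suc N) z + u * (eexp (Suc N) z - exp_coeff (Suc N) * z ^ Suc N)"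
    by (simp add: eexp_Suc)
  finally show ?case .
qed

lemma eexp_add_square_zero:
  fixes u z :: "'v::linorder egr"
  assumes "u * u = 0" "u * z ^ N = 0"
  shows "eexp N (z + u) = eexp N z * (1 + u)"
proof -
  have "u * (eexp N z - exp_coeff N * z ^ N) = u * eexp N z - exp_coeff N * (u * z ^ N)"
    by (simp add: algebra_simps)
  thus ?thesis using eexp_add_square_zero_exact[OF assms(1), of N z] assms(2)
    by (simp add: algebra_simps)
qed

lemma eexp_zero: "eexp N 0 = (1 :: 'v::linorder egr)"
proof (induction N)
  case 0 thus ?case by (simp add: eexp_def exp_coeff_def escal_one)
next
  case (Suc N) thus ?case by (simp add: eexp_Suc)
qed

lemma eexp_sum:
  fixes f :: "'b \<Rightarrow> 'v::linorder egr"
  assumes "finite J" "\<And>j. j \<in> J \<Longrightarrow> f j * f j = 0"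
    "\<And>J' j. J' \<subseteq> J \<Longrightarrow> j \<in> J \<Longrightarrow> f j * (\<Sum>i\<in>J'. f i) ^ N = 0"
  shows "eexp N (\<Sum>j\<in>J. f j) = (\<Prod>j\<in>J. 1 + f j)"
  using assms
proof (induction J rule: finite_induct)
  case empty
  thus ?case by (simp add: eexp_zero)
next
  case (insert k J)
  have "eexp N (\<Sum>j\<in>insert k J. f j) = eexp N ((\<Sum>j\<in>J. f j) + f k)"
    using insert by (simp add: add.commute)
  also have "\<dots> = eexp N (\<Sum>j\<in>J. f j) * (1 + f k)"
    by (rule eexp_add_square_zero) (use insert in auto)
  also have "eexp N (\<Sum>j\<in>J. f j) = (\<Prod>j\<in>J. 1 + f j)"
  proof (rule insert.IH)
    fix j assume "j \<in> J" thus "f j * f j = 0" using insert.prems(1) by auto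
  next
    fix J' j assume "J' \<subseteq> J" "j \<in> J"
    thus "f j * (\<Sum>i\<in>J'. f i) ^ N = 0" using insert.prems(2)[of J' j] by auto
  qed
  finally show ?case using insert by (simp add: mult.commute)
qed

lemma mult_power_eq_zero_by_degree:
  assumes "finite V" "degree_ge 2 a" "supported_on (V \<times> UNIV) a"
    "degree_ge 2 b" "supported_on (V \<times> UNIV) b"
  shows "a * b ^ (2 * card V) = 0"
proof (rule egr_eq_zero_by_degree)
  show "degree_ge (2 + 2 * card V * 2) (a * b ^ (2 * card V))"
    using assms(2,4) by (intro degree_ge_times degree_ge_power)
  have "supported_on ((V \<times> UNIV) \<union> (V \<times> UNIV)) (a * b ^ (2 * card V))"
    using assms(3,5) by (intro supported_on_times supported_on_power)
  thus "supported_on (V \<times> UNIV) (a * b ^ (2 * card V))" by simp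
  show "finite (V \<times> (UNIV :: bool set))" using assms(1) by simp
  show "card (V \<times> (UNIV :: bool set)) < 2 + 2 * card V * 2"
    by (simp add: card_cartesian_product card_UNIV_bool)
qed

lemma eexp_sum_square_zero:
  fixes f :: "'b \<Rightarrow> 'v::linorder egr"
  assumes "finite V" "finite J" "\<And>j. j \<in> J \<Longrightarrow> f j * f j = 0"
    "\<And>j. j \<in> J \<Longrightarrow> degree_ge 2 (f j) \<and> supported_on (V \<times> UNIV) (f j)"
  shows "eexp (2 * card V) (\<Sum>j\<in>J. f j) = (\<Prod>j\<in>J. 1 + f j)"
proof (rule eexp_sum[OF assms(2,3)])
  fix J' j assume J': "J' \<subseteq> J" and j: "j \<in> J"
  have "finite J'" using J' assms(2) by (rule finite_subset)
  hence "degree_ge 2 (\<Sum>i\<in>J'. f i) \<and> supported_on (V \<times> UNIV) (\<Sum>i\<in>J'. f i)"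
    using assms(4) J' by (auto intro!: degree_ge_sum supported_on_sum)
  thus "f j * (\<Sum>i\<in>J'. f i) ^ (2 * card V) = 0"
    using assms(4)[OF j] by (intro mult_power_eq_zero_by_degree[OF assms(1)]) auto
qed

lemma eexp_action_factor:
  fixes V :: "'v::linorder set" and E :: "'v set set"
  assumes fV: "finite V" and fE: "finite E" and E: "\<forall>A\<in>E. A \<subseteq> V \<and> 2 \<le> card A"
  shows "eexp (2 * card V) (escal lam * (\<Sum>i\<in>V. edens i) + (\<Sum>A\<in>E. escal (w A) * efpoly lam A))
       = (\<Prod>i\<in>V. 1 + escal lam * edens i) * (\<Prod>A\<in>E. 1 + escal (w A) * efpoly lam A)"
proof -
  define f where "f = case_sum (\<lambda>i. escal lam * edens i) (\<lambda>A. escal (w A) * efpoly lam A)"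
  have finA: "finite A" "2 \<le> card A" "A \<subseteq> V" if "A \<in> E" for A
    using E that fV by (auto intro: finite_subset)
  have square: "f j * f j = 0" if "j \<in> V <+> E" for j
  proof (cases j)
    case (Inl i)
    have "f j * f j = escal lam * escal lam * (edens i * edens i)" unfolding f_def Inl
      by (simp add: mult_ac)
    thus ?thesis by (simp add: edens_mult_self)
  next
    case (Inr A)
    hence "A \<in> E" using that by auto
    have "f j * f j = escal (w A) * escal (w A) * (efpoly lam A * efpoly lam A)"
      unfolding f_def Inr by (simp add: mult_ac)
    thus ?thesis using finA[OF \<open>A \<in> E\<close>] by (simp add: efpoly_mult_self)
  qed
  have degree: "degree_ge 2 (f j) \<and> supported_on (V \<times> UNIV) (f j)" if "j \<in> V <+> E" for j
  proof (cases j)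
    case (Inl i)
    hence "i \<in> V" using that by auto
    thus ?thesis unfolding f_def Inl
      by (auto intro: degree_ge_escal homogeneous_imp_degree_ge homogeneous_edens
          supported_on_escal supported_on_mono[OF supported_on_edens])
  next
    case (Inr A)
    hence "A \<in> E" using that by auto
    hence "degree_ge 2 (efpoly lam A)" "supported_on (A \<times> UNIV) (efpoly lam A)"
      "A \<times> (UNIV :: bool set) \<subseteq> V \<times> UNIV"
      using efpoly_degree_support[of A lam] finA by auto
    thus ?thesis unfolding f_def Inr
      by (auto intro: degree_ge_escal supported_on_escal supported_on_mono)
  qed
  have "eexp (2 * card V) (\<Sum>j\<in>V <+> E. f j) = (\<Prod>j\<in>V <+> E. 1 + f j)"
    using fV fE square degree by (intro eexp_sum_square_zero) auto
  thus ?thesis using fV fE by (simp add: sum.Plus prod.Plus f_def sum_distrib_left comp_def)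
qed

lemma eexp_action_expand:
  fixes V :: "'v::linorder set" and E :: "'v set set"
  assumes "finite V" "finite E" "\<forall>A\<in>E. A \<subseteq> V \<and> 2 \<le> card A"
  shows "eexp (2 * card V) (escal lam * (\<Sum>i\<in>V. edens i) + (\<Sum>A\<in>E. escal (w A) * efpoly lam A))
      = (\<Sum>F\<in>Pow E. escal (\<Prod>A\<in>F. w A) *
           ((\<Prod>A\<in>F. efpoly lam A) * (\<Prod>i\<in>V. 1 + escal lam * edens i)))"
proof -
  have "(\<Prod>A\<in>E. 1 + escal (w A) * efpoly lam A)
      = (\<Sum>F\<in>Pow E. (\<Prod>A\<in>F. escal (w A) * efpoly lam A) * (\<Prod>A\<in>E - F. 1))"
    using prod_add[OF assms(2), of "\<lambda>A. escal (w A) * efpoly lam A" "\<lambda>_. 1"]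
      by (simp add: add.commute)
  thus ?thesis unfolding eexp_action_factor[OF assms]
    by (simp add: prod.distrib escal_prod sum_distrib_left sum_distrib_right mult_ac)
qed

section \<open>Walks and cycles\<close>

definition walk :: "'v set set \<Rightarrow> nat \<Rightarrow> (nat \<Rightarrow> 'v) \<Rightarrow> (nat \<Rightarrow> 'v set) \<Rightarrow> bool" where
  "walk F m vs es \<longleftrightarrow> (\<forall>i<m. es i \<in> F \<and> vs i \<in> es i \<and> vs (Suc i) \<in> es i)"

lemma walk_of_rtrancl:
  assumes "(a, b) \<in> (adj_rel V F)\<^sup>*"
  shows "\<exists>m vs es. walk F m vs es \<and> vs 0 = a \<and> vs m = b"
  using assms
proof (induction rule: rtrancl_induct)
  case base
  show ?case by (rule exI[of _ 0], rule exI[of _ "\<lambda>_. a"]) (auto simp: walk_def)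
next
  case (step b c)
  then obtain m vs es where w: "walk F m vs es" "vs 0 = a" "vs m = b" by blast
  from step(2) obtain A where A: "A \<in> F" "b \<in> A" "c \<in> A" by (auto simp: adj_rel_def)
  define vs' where "vs' = vs(Suc m := c)"
  define es' where "es' = es(m := A)"
  have "walk F (Suc m) vs' es'"
    unfolding walk_def
  proof (intro allI impI)
    fix i assume "i < Suc m"
    show "es' i \<in> F \<and> vs' i \<in> es' i \<and> vs' (Suc i) \<in> es' i"
    proof (cases "i = m")
      case True thus ?thesis using A w by (simp add: vs'_def es'_def)
    next
      case False hence "i < m" using \<open>i < Suc m\<close> by simp
      thus ?thesis using w(1) by (simp add: walk_def vs'_def es'_def)
    qed
  qed
  moreover have "vs' 0 = a" "vs' (Suc m) = c" using w by (auto simp: vs'_def)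
  ultimately show ?case by blast
qed

lemma walk_skip_vertex_repeat:
  assumes w: "walk F m vs es" and ij: "i < j" "j \<le> m" "vs i = vs j"
  shows "\<exists>vs' es'. walk F (m - (j - i)) vs' es' \<and> vs' 0 = vs 0 \<and> vs' (m - (j - i)) = vs m"
proof -
  define d where "d = j - i"
  define vs' where "vs' k = (if k < i then vs k else vs (k + d))" for k
  define es' where "es' k = (if k < i then es k else es (k + d))" for k
  have "walk F (m - d) vs' es'"
    unfolding walk_def
  proof (intro allI impI)
    fix k assume k: "k < m - d"
    show "es' k \<in> F \<and> vs' k \<in> es' k \<and> vs' (Suc k) \<in> es' k"
    proof (cases "k < i")
      case True
      have "k < m" using True ij by simp
      hence a: "es k \<in> F" "vs k \<in> es k" "vs (Suc k) \<in> es k" using w by (auto simp: walk_def)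
      have "vs' (Suc k) = vs (Suc k)"
      proof (cases "Suc k < i")
        case False hence "Suc k = i" using True by simp
        thus ?thesis using ij by (simp add: vs'_def d_def)
      qed (simp add: vs'_def)
      thus ?thesis using a True by (simp add: vs'_def es'_def)
    next
      case False
      have "k + d < m" using k ij d_def by simp
      hence "es (k + d) \<in> F" "vs (k + d) \<in> es (k + d)" "vs (Suc (k + d)) \<in> es (k + d)"
        using w by (auto simp: walk_def)
      thus ?thesis using False by (simp add: vs'_def es'_def)
    qed
  qed
  moreover have "vs' 0 = vs 0"
    using ij by (cases "0 < i") (simp_all add: vs'_def d_def)
  moreover have "vs' (m - d) = vs m"
  proof -
    have "\<not> m - d < i" using ij unfolding d_def by arith
    moreover have "m - d + d = m" using ij unfolding d_def by arith
    ultimately show ?thesis by (simp add: vs'_def)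
  qed
  ultimately show ?thesis unfolding d_def by blast
qed

lemma walk_skip_edge_repeat:
  assumes w: "walk F m vs es" and ij: "i < j" "j < m" "es i = es j"
  shows "\<exists>vs' es'. walk F (m - (j - i)) vs' es' \<and> vs' 0 = vs 0 \<and> vs' (m - (j - i)) = vs m"
proof -
  define d where "d = j - i"
  define vs' where "vs' k = (if k \<le> i then vs k else vs (k + d))" for k
  define es' where "es' k = (if k < i then es k else es (k + d))" for k
  have "walk F (m - d) vs' es'"
    unfolding walk_def
  proof (intro allI impI)
    fix k assume k: "k < m - d"
    show "es' k \<in> F \<and> vs' k \<in> es' k \<and> vs' (Suc k) \<in> es' k"
    proof (cases "k < i")
      case True
      have "k < m" using True ij by simp
      hence "es k \<in> F" "vs k \<in> es k" "vs (Suc k) \<in> es k" using w by (auto simp: walk_def)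
      thus ?thesis using True by (simp add: vs'_def es'_def)
    next
      case False
      show ?thesis
      proof (cases "k = i")
        case True
        have "i < m" "j < m" using ij by auto
        hence "es j \<in> F" "vs i \<in> es i" "vs (Suc j) \<in> es j" using w by (auto simp: walk_def)
        thus ?thesis using True ij by (simp add: vs'_def es'_def d_def)
      next
        case False2: False
        hence ki: "i < k" using False by simp
        have "k + d < m" using k ij d_def by simp
        hence "es (k + d) \<in> F" "vs (k + d) \<in> es (k + d)" "vs (Suc (k + d)) \<in> es (k + d)"
          using w by (auto simp: walk_def)
        thus ?thesis using ki by (simp add: vs'_def es'_def)
      qed
    qed
  qed
  moreover have "vs' 0 = vs 0" by (simp add: vs'_def)
  moreover have "vs' (m - d) = vs m"
  proof -
    have "\<not> m - d \<le> i" using ij unfolding d_def by arith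
    moreover have "m - d + d = m" using ij unfolding d_def by arith
    ultimately show ?thesis by (simp add: vs'_def)
  qed
  ultimately show ?thesis unfolding d_def by blast
qed

lemma shortest_walk_inj:
  assumes "(a, b) \<in> (adj_rel V F)\<^sup>*"
  shows "\<exists>m vs es. walk F m vs es \<and> vs 0 = a \<and> vs m = b \<and> inj_on vs {..m} \<and> inj_on es {..<m}"
proof -
  define P where "P m \<longleftrightarrow> (\<exists>vs es. walk F m vs es \<and> vs 0 = a \<and> vs m = b)" for m
  have ex: "\<exists>m. P m" using walk_of_rtrancl[OF assms] by (auto simp: P_def)
  define m where "m = (LEAST m. P m)"
  have Pm: "P m" unfolding m_def by (rule LeastI_ex[OF ex])
  have minm: "\<not> P m'" if "m' < m" for m' using that not_less_Least unfolding m_def by blast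
  from Pm obtain vs es where w: "walk F m vs es" "vs 0 = a" "vs m = b" by (auto simp: P_def)
  have "inj_on vs {..m}"
  proof (rule ccontr)
    assume "\<not> inj_on vs {..m}"
    then obtain i j where "i \<le> m" "j \<le> m" "i \<noteq> j" "vs i = vs j" by (auto simp: inj_on_def)
    then obtain i j where ij: "i < j" "j \<le> m" "vs i = vs j"
      by (metis linorder_neqE_nat)
    from walk_skip_vertex_repeat[OF w(1) ij] have "P (m - (j - i))" using w by (auto simp: P_def)
    moreover have "m - (j - i) < m" using ij by simp
    ultimately show False using minm by blast
  qed
  moreover have "inj_on es {..<m}"
  proof (rule ccontr)
    assume "\<not> inj_on es {..<m}"
    then obtain i j where "i < m" "j < m" "i \<noteq> j" "es i = es j" by (auto simp: inj_on_def)
    then obtain i j where ij: "i < j" "j < m" "es i = es j"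
      by (metis linorder_neqE_nat)
    from walk_skip_edge_repeat[OF w(1) ij] have "P (m - (j - i))" using w by (auto simp: P_def)
    moreover have "m - (j - i) < m" using ij by simp
    ultimately show False using minm by blast
  qed
  ultimately show ?thesis using w by blast
qed

lemma has_cycle_mono: "has_cycle F \<Longrightarrow> F \<subseteq> G \<Longrightarrow> has_cycle G"
  unfolding has_cycle_def by blast

lemma has_cycle_insert_of_reach:
  assumes "u \<in> B" "v \<in> B" "u \<noteq> v" "(u, v) \<in> (adj_rel V F)\<^sup>*" "B \<notin> F"
  shows "has_cycle (insert B F)"
proof -
  obtain m vs es
    where w: "walk F m vs es" "vs 0 = u" "vs m = v" "inj_on vs {..m}" "inj_on es {..<m}"
    using shortest_walk_inj[OF assms(4)] by blast
  have m1: "m \<ge> 1" using w assms(3) by (cases m) auto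
  define vs' where "vs' = vs(Suc m := u)"
  define es' where "es' = es(m := B)"
  have "\<forall>i<Suc m. es' i \<in> insert B F \<and> vs' i \<in> es' i \<and> vs' (Suc i) \<in> es' i"
  proof (intro allI impI)
    fix i assume "i < Suc m"
    show "es' i \<in> insert B F \<and> vs' i \<in> es' i \<and> vs' (Suc i) \<in> es' i"
    proof (cases "i = m")
      case True thus ?thesis using assms w by (simp add: vs'_def es'_def)
    next
      case False hence "i < m" using \<open>i < Suc m\<close> by simp
      thus ?thesis using w(1) by (simp add: walk_def vs'_def es'_def)
    qed
  qed
  moreover have "inj_on vs' {..<Suc m}"
  proof -
    have "{..<Suc m} = {..m}" by auto
    moreover have "\<forall>i\<in>{..m}. vs' i = vs i" by (simp add: vs'_def)
    ultimately show ?thesis using w(4) by (simp add: inj_on_def)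
  qed
  moreover have "vs' (Suc m) = vs' 0" using w by (simp add: vs'_def)
  moreover have "inj_on es' {..<Suc m}"
  proof -
    have "\<forall>i<m. es i \<in> F" using w(1) by (simp add: walk_def)
    hence "\<forall>i<m. es i \<noteq> B" using assms(5) by auto
    thus ?thesis using w(5) unfolding inj_on_def es'_def
      by (metis fun_upd_apply lessThan_iff less_Suc_eq)
  qed
  moreover have "Suc m \<ge> 2" using m1 by simp
  ultimately show ?thesis unfolding has_cycle_def by blast
qed

lemma rtrancl_path_segment:
  assumes "a \<le> b" "\<And>i. a \<le> i \<Longrightarrow> i < b \<Longrightarrow> (f i, f (Suc i)) \<in> R"
  shows "(f a, f b) \<in> R\<^sup>*"
  using assms
proof (induction b)
  case (Suc b)
  show ?case
  proof (cases "a = Suc b")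
    case False
    hence "(f a, f b) \<in> R\<^sup>*" using Suc by auto
    moreover have "(f b, f (Suc b)) \<in> R" using Suc False by auto
    ultimately show ?thesis by (rule rtrancl_into_rtrancl)
  qed simp
qed simp

lemma reach_of_has_cycle_insert:
  assumes cyc: "has_cycle (insert B F)" and acyc: "\<not> has_cycle F" and sub: "\<forall>A\<in>F. A \<subseteq> V"
  shows "\<exists>u\<in>B. \<exists>v\<in>B. u \<noteq> v \<and> (u, v) \<in> (adj_rel V F)\<^sup>*"
proof -
  obtain k vs es where c: "k \<ge> 2" "\<forall>i<k. es i \<in> insert B F \<and> vs i \<in> es i \<and> vs (Suc i) \<in> es i"
    "inj_on vs {..<k}" "vs k = vs 0" "inj_on es {..<k}"
    using cyc unfolding has_cycle_def by blast
  have "\<exists>j<k. es j = B"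
  proof (rule ccontr)
    assume "\<not> (\<exists>j<k. es j = B)"
    hence "\<forall>i<k. es i \<in> F \<and> vs i \<in> es i \<and> vs (Suc i) \<in> es i" using c(2) by blast
    hence "has_cycle F" unfolding has_cycle_def using c by blast
    thus False using acyc by simp
  qed
  then obtain j where j: "j < k" "es j = B" by blast
  have other: "es i \<in> F" if "i < k" "i \<noteq> j" for i
  proof -
    have "es i \<noteq> es j" using c(5) that j by (auto simp: inj_on_def)
    thus ?thesis using c(2) that j by auto
  qed
  have adj: "(vs i, vs (Suc i)) \<in> adj_rel V F" if "i < k" "i \<noteq> j" for i
  proof -
    have "es i \<in> F" "vs i \<in> es i" "vs (Suc i) \<in> es i" using other[OF that] c(2) that by auto
    thus ?thesis using sub unfolding adj_rel_def by blast
  qed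
  have "(vs 0, vs j) \<in> (adj_rel V F)\<^sup>*"
    by (rule rtrancl_path_segment) (use adj j in auto)
  moreover have "(vs (Suc j), vs k) \<in> (adj_rel V F)\<^sup>*"
    by (rule rtrancl_path_segment) (use adj j in auto)
  ultimately have "(vs (Suc j), vs j) \<in> (adj_rel V F)\<^sup>*" using c(4) by simp
  moreover have "vs (Suc j) \<in> B" "vs j \<in> B" using c(2) j by auto
  moreover have "vs (Suc j) \<noteq> vs j"
  proof (cases "Suc j < k")
    case True thus ?thesis using inj_onD[OF c(3), of "Suc j" j] j by auto
  next
    case False hence "Suc j = k" using j by simp
    hence "vs (Suc j) = vs 0" "j \<noteq> 0" using c by auto
    thus ?thesis using c(3) j by (auto simp: inj_on_def)
  qed
  ultimately show ?thesis by blast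
qed

abbreviation reach :: "'v set \<Rightarrow> 'v set set \<Rightarrow> ('v \<times> 'v) set" where
  "reach V F \<equiv> (adj_rel V F)\<^sup>*"

lemma reach_sym: "(a, b) \<in> reach V F \<Longrightarrow> (b, a) \<in> reach V F"
proof -
  have "sym (adj_rel V F)" by (auto simp: sym_def adj_rel_def)
  hence "sym (reach V F)" by (rule sym_rtrancl)
  thus "(a, b) \<in> reach V F \<Longrightarrow> (b, a) \<in> reach V F" by (auto simp: sym_def)
qed

lemma reach_closed: "(a, b) \<in> reach V F \<Longrightarrow> a \<in> V \<Longrightarrow> b \<in> V"
  by (induction rule: rtrancl_induct) (auto simp: adj_rel_def)

lemma reach_mono: "F \<subseteq> G \<Longrightarrow> reach V F \<subseteq> reach V G"
  by (rule rtrancl_mono) (auto simp: adj_rel_def)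

lemma reach_Image_eq: "(a, b) \<in> reach V F \<Longrightarrow> reach V F `` {a} = reach V F `` {b}"
  by (auto intro: rtrancl_trans reach_sym)

lemma componentsE:
  assumes "T \<in> V // reach V F"
  obtains w where "w \<in> V" "T = reach V F `` {w}"
  using assms unfolding quotient_def by auto

lemma component_in_quotient: "w \<in> V \<Longrightarrow> reach V F `` {w} \<in> V // reach V F"
  unfolding quotient_def by auto

lemma reach_Image_subset: "w \<in> V \<Longrightarrow> reach V F `` {w} \<subseteq> V"
  using reach_closed by fastforce

lemma components_partition:
  assumes "finite V"
  shows "finite (V // reach V F)" "\<forall>T\<in>V // reach V F. T \<noteq> {} \<and> finite T"
    "\<forall>A\<in>V // reach V F. \<forall>B\<in>V // reach V F. A \<noteq> B \<longrightarrow> A \<inter> B = {}"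
    "\<Union>(V // reach V F) = V"
proof -
  show "finite (V // reach V F)" using assms unfolding quotient_def by auto
  show "\<forall>T\<in>V // reach V F. T \<noteq> {} \<and> finite T"
    using assms by (auto elim!: componentsE intro: finite_subset[OF reach_Image_subset])
  show "\<forall>A\<in>V // reach V F. \<forall>B\<in>V // reach V F. A \<noteq> B \<longrightarrow> A \<inter> B = {}"
  proof (intro ballI impI)
    fix A B assume "A \<in> V // reach V F" "B \<in> V // reach V F" "A \<noteq> B"
    then obtain a b where ab: "A = reach V F `` {a}" "B = reach V F `` {b}"
      by (auto elim!: componentsE)
    show "A \<inter> B = {}"
    proof (rule ccontr)
      assume "A \<inter> B \<noteq> {}"
      then obtain z where "(a, z) \<in> reach V F" "(b, z) \<in> reach V F" using ab by auto
      hence "reach V F `` {a} = reach V F `` {b}" by (metis reach_Image_eq)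
      thus False using ab \<open>A \<noteq> B\<close> by simp
    qed
  qed
  show "\<Union>(V // reach V F) = V"
  proof
    show "\<Union>(V // reach V F) \<subseteq> V" by (auto elim!: componentsE dest: reach_closed)
    show "V \<subseteq> \<Union>(V // reach V F)" unfolding quotient_def by auto
  qed
qed

lemma components_empty: "V // reach V {} = (\<lambda>w. {w}) ` V"
proof -
  have "adj_rel V {} = {}" by (simp add: adj_rel_def)
  thus ?thesis unfolding quotient_def by auto
qed

section \<open>Adding one hyperedge\<close>

text \<open>\<open>\<not> links V F B\<close> says that \<open>B\<close> meets every component of \<open>F\<close> at most once.\<close>

definition links :: "'v set \<Rightarrow> 'v set set \<Rightarrow> 'v set \<Rightarrow> bool" where
  "links V F B \<longleftrightarrow> (\<exists>u\<in>B. \<exists>v\<in>B. u \<noteq> v \<and> (u, v) \<in> reach V F)"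

lemma efpoly_mult_components_links:
  fixes V :: "'v::linorder set"
  assumes "finite V" "B \<subseteq> V" "links V F B"
  shows "efpoly lam B * (\<Prod>T\<in>V // reach V F. efpoly lam T) = 0"
proof -
  obtain u v where uv: "u \<in> B" "v \<in> B" "u \<noteq> v" "(u, v) \<in> reach V F" using assms(3)
    by (auto simp: links_def)
  define T where "T = reach V F `` {u}"
  have T: "T \<in> V // reach V F" using uv assms by (auto simp: T_def intro: component_in_quotient)
  have fT: "finite T" using components_partition[OF assms(1)] T by auto
  have "efpoly lam B * efpoly lam T = 0"
    by (rule efpoly_mult_two_common[of B T u v])
        (use uv assms fT in \<open>auto simp: T_def intro: finite_subset\<close>)
  moreover have "(\<Prod>T\<in>V // reach V F. efpoly lam T)
      = efpoly lam T * (\<Prod>T\<in>V // reach V F - {T}. efpoly lam T)"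
    using components_partition[OF assms(1)] T by (simp add: prod.remove)
  ultimately show ?thesis by (simp add: mult.assoc[symmetric])
qed

lemma efpoly_mult_prod_pendant:
  fixes B :: "'v::linorder set"
  assumes "finite B" "finite I" "I \<subseteq> B" "\<And>b. b \<in> B \<Longrightarrow> finite (g b) \<and> g b \<inter> B = {b}"
    "\<And>b c. b \<in> B \<Longrightarrow> c \<in> B \<Longrightarrow> b \<noteq> c \<Longrightarrow> g b \<inter> g c = {}"
  shows "efpoly lam B * (\<Prod>b\<in>I. efpoly lam (g b)) = efpoly lam (B \<union> \<Union>(g ` I))"
  using assms(2,3)
proof (induction I rule: finite_induct)
  case empty thus ?case by simp
next
  case (insert c I)
  have c: "c \<in> B" using insert by auto
  have "efpoly lam B * (\<Prod>b\<in>insert c I. efpoly lam (g b))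
      = efpoly lam (g c) * (efpoly lam B * (\<Prod>b\<in>I. efpoly lam (g b)))"
    using insert(1,2) by (simp add: mult_ac)
  also have "\<dots> = efpoly lam (g c) * efpoly lam (B \<union> \<Union>(g ` I))"
  proof -
    have "efpoly lam B * (\<Prod>b\<in>I. efpoly lam (g b)) = efpoly lam (B \<union> \<Union>(g ` I))" using insert by auto
    thus ?thesis by simp
  qed
  also have "\<dots> = efpoly lam (g c \<union> (B \<union> \<Union>(g ` I)))"
  proof (rule efpoly_mult_Int_singleton)
    show "finite (g c)" using assms c by auto
    show "finite (B \<union> \<Union>(g ` I))" using assms insert by (auto intro: finite_subset)
    have "g c \<inter> \<Union>(g ` I) = {}" using assms(5) c insert by blast
    thus "g c \<inter> (B \<union> \<Union>(g ` I)) = {c}" using assms(4)[OF c] by blast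
  qed
  also have "g c \<union> (B \<union> \<Union>(g ` I)) = B \<union> \<Union>(g ` insert c I)" by auto
  finally show ?case .
qed

lemma reach_insert_iff:
  assumes "B \<subseteq> V"
  shows "(w, y) \<in> reach V (insert B F) \<longleftrightarrow>
    (w, y) \<in> reach V F \<or> (w \<in> reach V F `` B \<and> y \<in> reach V F `` B)"
proof
  let ?R = "reach V F" and ?RB = "reach V F `` B"
  have B_RB: "B \<subseteq> ?RB" by auto
  show "(w, y) \<in> ?R \<or> (w \<in> ?RB \<and> y \<in> ?RB)" if "(w, y) \<in> reach V (insert B F)"
    using that
  proof (induction rule: rtrancl_induct)
    case (step y z)
    from step(2) have yz: "(y, z) \<in> adj_rel V F \<or> (y \<in> B \<and> z \<in> B)"
      by (auto simp: adj_rel_def)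
    show ?case
    proof (cases "(w, y) \<in> ?R")
      case wy: True
      show ?thesis
      proof (cases "(y, z) \<in> adj_rel V F")
        case True thus ?thesis using wy by (meson rtrancl_into_rtrancl)
      next
        case False
        hence "y \<in> B" "z \<in> B" using yz by auto
        thus ?thesis using wy B_RB by (auto intro: reach_sym)
      qed
    next
      case False
      hence wy: "w \<in> ?RB" "y \<in> ?RB" using step by auto
      have "z \<in> ?RB"
        using yz wy B_RB by (auto intro: rtrancl_into_rtrancl)
      thus ?thesis using wy by simp
    qed
  qed simp
  show "(w, y) \<in> reach V (insert B F)" if wy: "(w, y) \<in> ?R \<or> (w \<in> ?RB \<and> y \<in> ?RB)"
  proof -
    have sub: "?R \<subseteq> reach V (insert B F)" by (rule reach_mono) auto
    show ?thesis
    proof (cases "(w, y) \<in> ?R")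
      case True thus ?thesis using sub by auto
    next
      case False
      then obtain b c where bc: "b \<in> B" "c \<in> B" "(b, w) \<in> ?R" "(c, y) \<in> ?R"
        using wy by auto
      have "(b, c) \<in> adj_rel V (insert B F)" using bc assms unfolding adj_rel_def by auto
      moreover have "(w, b) \<in> reach V (insert B F)" "(c, y) \<in> reach V (insert B F)"
        using bc sub by (auto intro: reach_sym)
      ultimately show ?thesis by (meson r_into_rtrancl rtrancl_trans)
    qed
  qed
qed

lemma components_insert:
  assumes "B \<subseteq> V" "B \<noteq> {}"
  shows "V // reach V (insert B F) =
    insert (reach V F `` B) {T \<in> V // reach V F. T \<inter> B = {}}"
proof -
  let ?R = "reach V F" and ?RB = "reach V F `` B"
  have new_class: "reach V (insert B F) `` {w} = (if w \<in> ?RB then ?RB else ?R `` {w})" for w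
  proof (cases "w \<in> ?RB")
    case True
    have "?R `` {w} \<subseteq> ?RB" using True by (auto intro: rtrancl_trans)
    thus ?thesis using True reach_insert_iff[OF assms(1)] by auto
  qed (use reach_insert_iff[OF assms(1)] in auto)
  have meets: "w \<in> ?RB \<longleftrightarrow> ?R `` {w} \<inter> B \<noteq> {}" for w
    by (auto intro: reach_sym)
  show ?thesis
  proof
    show "V // reach V (insert B F) \<subseteq> insert ?RB {T \<in> V // ?R. T \<inter> B = {}}"
    proof
      fix T assume "T \<in> V // reach V (insert B F)"
      then obtain w where w: "w \<in> V" "T = reach V (insert B F) `` {w}" by (auto elim: componentsE)
      show "T \<in> insert ?RB {T \<in> V // ?R. T \<inter> B = {}}"
      proof (cases "w \<in> ?RB")
        case True thus ?thesis using new_class w by simp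
      next
        case False thus ?thesis using new_class w meets component_in_quotient[OF w(1)] by auto
      qed
    qed
    show "insert ?RB {T \<in> V // ?R. T \<inter> B = {}} \<subseteq> V // reach V (insert B F)"
    proof
      fix T assume "T \<in> insert ?RB {T \<in> V // ?R. T \<inter> B = {}}"
      thus "T \<in> V // reach V (insert B F)"
      proof
        obtain b where b: "b \<in> B" using assms(2) by auto
        hence "b \<in> V" "b \<in> ?RB" using assms(1) by auto
        moreover assume "T = ?RB"
        ultimately show ?thesis using new_class[of b] component_in_quotient[of b V "insert B F"]
          by simp
      next
        assume "T \<in> {T \<in> V // ?R. T \<inter> B = {}}"
        then obtain w where w: "w \<in> V" "T = ?R `` {w}" "T \<inter> B = {}" by (auto elim: componentsE)
        hence "w \<notin> ?RB" using meets by auto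
        thus ?thesis using new_class[of w] component_in_quotient[OF w(1), of "insert B F"] w by simp
      qed
    qed
  qed
qed

lemma not_links_reach_Image:
  assumes "\<not> links V F B"
  shows reach_Image_Int_self: "\<And>b. b \<in> B \<Longrightarrow> reach V F `` {b} \<inter> B = {b}"
    and reach_Image_disjoint:
      "\<And>b c. b \<in> B \<Longrightarrow> c \<in> B \<Longrightarrow> b \<noteq> c \<Longrightarrow> reach V F `` {b} \<inter> reach V F `` {c} = {}"
proof -
  let ?R = "reach V F"
  show "?R `` {b} \<inter> B = {b}" if "b \<in> B" for b
  proof
    show "?R `` {b} \<inter> B \<subseteq> {b}"
    proof
      fix x assume "x \<in> ?R `` {b} \<inter> B"
      hence "(b, x) \<in> ?R" "x \<in> B" by auto
      thus "x \<in> {b}" using assms that unfolding links_def by auto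
    qed
    show "{b} \<subseteq> ?R `` {b} \<inter> B" using that by auto
  qed
  show "?R `` {b} \<inter> ?R `` {c} = {}" if "b \<in> B" "c \<in> B" "b \<noteq> c" for b c
  proof (rule ccontr)
    assume "?R `` {b} \<inter> ?R `` {c} \<noteq> {}"
    then obtain z where "(b, z) \<in> ?R" "(c, z) \<in> ?R" by auto
    hence "(b, c) \<in> ?R" using reach_sym[of c z] by (blast intro: rtrancl_trans)
    thus False using assms that unfolding links_def by blast
  qed
qed

lemma components_meeting:
  assumes "B \<subseteq> V" "\<not> links V F B"
  shows "{T \<in> V // reach V F. T \<inter> B \<noteq> {}} = (\<lambda>b. reach V F `` {b}) ` B"
    and "inj_on (\<lambda>b. reach V F `` {b}) B"
proof -
  let ?R = "reach V F"
  note meet = reach_Image_Int_self[OF assms(2)]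
  show "inj_on (\<lambda>b. ?R `` {b}) B"
  proof (rule inj_onI)
    fix b c assume b: "b \<in> B" and c: "c \<in> B" and eq: "?R `` {b} = ?R `` {c}"
    have "{b} = ?R `` {b} \<inter> B" using meet[OF b] by (rule sym)
    also have "\<dots> = {c}" unfolding eq by (rule meet[OF c])
    finally show "b = c" by simp
  qed
  show "{T \<in> V // ?R. T \<inter> B \<noteq> {}} = (\<lambda>b. ?R `` {b}) ` B"
  proof
    show "{T \<in> V // ?R. T \<inter> B \<noteq> {}} \<subseteq> (\<lambda>b. ?R `` {b}) ` B"
    proof
      fix T assume "T \<in> {T \<in> V // ?R. T \<inter> B \<noteq> {}}"
      hence T: "T \<in> V // ?R" and "T \<inter> B \<noteq> {}" by auto
      then obtain b where b: "b \<in> T" "b \<in> B" by auto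
      from T obtain w where "w \<in> V" and w: "T = ?R `` {w}" by (rule componentsE)
      have "?R `` {w} = ?R `` {b}" using b w by (intro reach_Image_eq) auto
      thus "T \<in> (\<lambda>b. ?R `` {b}) ` B" using b w by blast
    qed
    show "(\<lambda>b. ?R `` {b}) ` B \<subseteq> {T \<in> V // ?R. T \<inter> B \<noteq> {}}"
    proof
      fix T assume "T \<in> (\<lambda>b. ?R `` {b}) ` B"
      then obtain b where b: "b \<in> B" and T: "T = ?R `` {b}" by blast
      have "T \<in> V // ?R" unfolding T using b assms(1) by (intro component_in_quotient) auto
      moreover have "b \<in> T \<inter> B" unfolding T using b by auto
      ultimately show "T \<in> {T \<in> V // ?R. T \<inter> B \<noteq> {}}" by blast
    qed
  qed
qed

lemma efpoly_mult_components_merge: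
  fixes V :: "'v::linorder set"
  assumes fV: "finite V" and BV: "B \<subseteq> V" and Bne: "B \<noteq> {}" and nl: "\<not> links V F B"
  shows "efpoly lam B * (\<Prod>T\<in>V // reach V F. efpoly lam T) =
      (\<Prod>T\<in>V // reach V (insert B F). efpoly lam T)"
    and "card (V // reach V (insert B F)) + card B = card (V // reach V F) + 1"
proof -
  let ?R = "reach V F" and ?g = "\<lambda>b. reach V F `` {b}"
  define P0 where "P0 = {T \<in> V // ?R. T \<inter> B = {}}"
  define PB where "PB = {T \<in> V // ?R. T \<inter> B \<noteq> {}}"
  note meeting = components_meeting[OF BV nl]
  have fB: "finite B" using fV BV finite_subset by auto
  have dec: "V // ?R = PB \<union> P0" "PB \<inter> P0 = {}" unfolding PB_def P0_def by auto
  have "finite (V // ?R)" by (rule components_partition(1)[OF fV])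
  hence fin: "finite PB" "finite P0" using dec(1) by auto
  have new: "V // reach V (insert B F) = insert (?R `` B) P0" and RB_P0: "?R `` B \<notin> P0"
    using components_insert[OF BV Bne] Bne unfolding P0_def by auto
  have "efpoly lam B * (\<Prod>T\<in>PB. efpoly lam T) = efpoly lam B * (\<Prod>b\<in>B. efpoly lam (?g b))"
    unfolding PB_def meeting(1) using meeting(2) by (simp add: prod.reindex)
  also have "\<dots> = efpoly lam (B \<union> \<Union>(?g ` B))"
    by (rule efpoly_mult_prod_pendant[OF fB fB subset_refl])
      (use not_links_reach_Image[OF nl] fV BV in \<open>auto intro: finite_subset[OF reach_Image_subset]\<close>)
  also have "B \<union> \<Union>(?g ` B) = ?R `` B" by auto
  finally have glue: "efpoly lam B * (\<Prod>T\<in>PB. efpoly lam T) = efpoly lam (?R `` B)" .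
  show "efpoly lam B * (\<Prod>T\<in>V // ?R. efpoly lam T) = (\<Prod>T\<in>V // reach V (insert B F). efpoly lam T)"
    unfolding dec(1) new using fin dec(2) RB_P0 glue
    by (simp add: prod.union_disjoint mult.assoc[symmetric])
  have "card PB = card B" unfolding PB_def meeting(1) using meeting(2) by (simp add: card_image)
  thus "card (V // reach V (insert B F)) + card B = card (V // ?R) + 1"
    unfolding dec(1) new using fin dec(2) RB_P0 by (simp add: card_Un_disjoint)
qed

text \<open>An edge \<open>B \<in> F\<close> is read as a parallel copy of \<open>B\<close>, which closes a cycle of length two
  as soon as \<open>|B| \<ge> 2\<close>.\<close>

definition creates_cycle :: "'v set set \<Rightarrow> 'v set \<Rightarrow> bool" where
  "creates_cycle F B \<longleftrightarrow> (B \<notin> F \<and> has_cycle (insert B F)) \<or> (B \<in> F \<and> 2 \<le> card B)"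

lemma links_iff_creates_cycle:
  assumes fV: "finite V" and acyc: "\<not> has_cycle F" and sub: "\<forall>A\<in>F. A \<subseteq> V" and BV: "B \<subseteq> V"
  shows "links V F B \<longleftrightarrow> creates_cycle F B"
proof (cases "B \<in> F")
  case True
  have fB: "finite B" using fV BV finite_subset by auto
  have "links V F B \<longleftrightarrow> 2 \<le> card B"
  proof
    assume "links V F B"
    then obtain u v where "u \<in> B" "v \<in> B" "u \<noteq> v" by (auto simp: links_def)
    hence "{u, v} \<subseteq> B" "card {u, v} = 2" by auto
    thus "2 \<le> card B" using fB by (metis card_mono)
  next
    assume "2 \<le> card B"
    then obtain u v where uv: "u \<in> B" "v \<in> B" "u \<noteq> v" by (rule card_ge_2_obtain)
    have "(u, v) \<in> adj_rel V F" using uv True BV unfolding adj_rel_def by auto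
    thus "links V F B" using uv unfolding links_def by auto
  qed
  thus ?thesis using True by (simp add: creates_cycle_def)
next
  case False
  have "links V F B \<longleftrightarrow> has_cycle (insert B F)"
  proof
    assume "links V F B"
    then obtain u v where "u \<in> B" "v \<in> B" "u \<noteq> v" "(u, v) \<in> reach V F" by (auto simp: links_def)
    thus "has_cycle (insert B F)" using has_cycle_insert_of_reach False by metis
  next
    assume "has_cycle (insert B F)"
    thus "links V F B" using reach_of_has_cycle_insert[OF _ acyc sub] unfolding links_def by blast
  qed
  thus ?thesis using False by (simp add: creates_cycle_def)
qed

lemma efpoly_mult_components:
  fixes V :: "'v::linorder set"
  assumes fV: "finite V" and BV: "B \<subseteq> V" and Bne: "B \<noteq> {}" and sub: "\<forall>A\<in>F. A \<subseteq> V"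
    and acyc: "\<not> has_cycle F"
  shows "efpoly lam B * (\<Prod>T\<in>V // reach V F. efpoly lam T) =
    (if creates_cycle F B then 0 else \<Prod>T\<in>V // reach V (insert B F). efpoly lam T)"
  using efpoly_mult_components_links[OF fV BV] efpoly_mult_components_merge(1)[OF fV BV Bne]
    links_iff_creates_cycle[OF fV acyc sub BV] by auto

lemma ncomp_insert:
  fixes V :: "'v::linorder set"
  assumes "finite V" "B \<subseteq> V" "B \<noteq> {}" "\<forall>A\<in>F. A \<subseteq> V" "\<not> has_cycle F" "\<not> creates_cycle F B"
  shows "ncomp V (insert B F) + card B = ncomp V F + 1"
  using efpoly_mult_components_merge(2)[OF assms(1-3)] links_iff_creates_cycle[OF assms(1,5,4,2)]
      assms(6)
  unfolding ncomp_def by auto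

definition forest_weight :: "complex \<Rightarrow> 'v::linorder set \<Rightarrow> 'v set set \<Rightarrow> 'v egr" where
  "forest_weight lam V F = (if has_cycle F then 0 else \<Prod>T\<in>V // reach V F. efpoly lam T)"

lemma not_has_cycle_empty: "\<not> has_cycle {}"
proof
  assume "has_cycle {}"
  then obtain k :: nat and es :: "nat \<Rightarrow> 'a set" where "k \<ge> 2" "\<forall>i<k. es i \<in> ({} :: 'a set set)"
    unfolding has_cycle_def by blast
  moreover have "(0::nat) < k" using \<open>k \<ge> 2\<close> by simp
  ultimately have "es 0 \<in> ({} :: 'a set set)" by blast
  thus False by simp
qed

lemma prod_efpoly_forest_weight:
  fixes V :: "'v::linorder set"
  assumes fV: "finite V" and "finite F" and "\<forall>A\<in>F. A \<subseteq> V \<and> A \<noteq> {}"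
  shows "(\<Prod>A\<in>F. efpoly lam A) = forest_weight lam V F"
  using assms(2,3)
proof (induction F rule: finite_induct)
  case empty
  have "(\<Prod>T\<in>V // reach V {}. efpoly lam T) = (\<Prod>w\<in>V. efpoly lam {w})"
    unfolding components_empty by (subst prod.reindex) (auto simp: inj_on_def)
  thus ?case by (simp add: forest_weight_def not_has_cycle_empty efpoly_singleton)
next
  case (insert A F)
  have IH: "(\<Prod>A\<in>F. efpoly lam A) = forest_weight lam V F" using insert by auto
  show ?case
  proof (cases "has_cycle F")
    case True
    hence "has_cycle (insert A F)" by (rule has_cycle_mono) auto
    thus ?thesis using True insert IH by (simp add: forest_weight_def)
  next
    case False
    have "(\<Prod>A\<in>insert A F. efpoly lam A) = efpoly lam A * (\<Prod>T\<in>V // reach V F. efpoly lam T)"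
      using insert IH False by (simp add: forest_weight_def)
    also have "\<dots> = (if creates_cycle F A then 0 else \<Prod>T\<in>V // reach V (insert A F). efpoly lam T)"
      by (rule efpoly_mult_components[OF fV]) (use insert False in auto)
    also have "\<dots> = forest_weight lam V (insert A F)"
      using insert by (simp add: creates_cycle_def forest_weight_def)
    finally show ?thesis .
  qed
qed

definition compatible :: "'v set set \<Rightarrow> 'v set list \<Rightarrow> bool" where
  "compatible F L \<longleftrightarrow> \<not> has_cycle (F \<union> set L) \<and> (\<forall>C\<in>set L. 2 \<le> card C \<longrightarrow> C \<notin> F)"

lemma compatible_ConsD: "compatible F (C # L) \<Longrightarrow> compatible F L"
  unfolding compatible_def using has_cycle_mono[of "F \<union> set L" "F \<union> set (C # L)"] by auto

lemma compatible_Cons_iff: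
  assumes "compatible F L" "C \<notin> set L"
  shows "compatible F (C # L) \<longleftrightarrow> \<not> creates_cycle (F \<union> set L) C"
proof (cases "C \<in> F \<union> set L")
  case True
  hence "C \<in> F" "insert C (F \<union> set L) = F \<union> set L" using assms(2) by auto
  thus ?thesis using assms(1) True unfolding compatible_def creates_cycle_def by auto
next
  case False
  thus ?thesis using assms(1) unfolding compatible_def creates_cycle_def by auto
qed

lemma prod_list_efpoly_forest_weight:
  fixes V :: "'v::linorder set"
  assumes fV: "finite V" and "distinct L" and "\<forall>A\<in>F \<union> set L. A \<subseteq> V \<and> A \<noteq> {}"
  shows "prod_list (map (efpoly lam) L) * forest_weight lam V F =
      (if compatible F L then \<Prod>T\<in>V // reach V (F \<union> set L). efpoly lam T else 0)
    \<and> (compatible F L \<longrightarrow> int (ncomp V (F \<union> set L)) = int (ncomp V F) - (\<Sum>C\<leftarrow>L. int (card C) - 1))"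
  using assms(2,3)
proof (induction L)
  case Nil
  show ?case by (simp add: compatible_def forest_weight_def ncomp_def)
next
  case (Cons C L)
  let ?G = "F \<union> set L"
  have IH: "prod_list (map (efpoly lam) L) * forest_weight lam V F =
      (if compatible F L then \<Prod>T\<in>V // reach V ?G. efpoly lam T else 0)"
    "compatible F L \<longrightarrow> int (ncomp V ?G) = int (ncomp V F) - (\<Sum>C\<leftarrow>L. int (card C) - 1)"
    using Cons by auto
  have C: "C \<notin> set L" "C \<subseteq> V" "C \<noteq> {}" using Cons by auto
  have eqG: "F \<union> set (C # L) = insert C ?G" by auto
  show ?case
  proof (cases "compatible F L")
    case False
    thus ?thesis using IH compatible_ConsD by (auto simp: mult.assoc)
  next
    case True
    have acyc: "\<not> has_cycle ?G" using True unfolding compatible_def by simp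
    have subG: "\<forall>A\<in>?G. A \<subseteq> V" using Cons by auto
    have "prod_list (map (efpoly lam) (C # L)) * forest_weight lam V F =
        efpoly lam C * (\<Prod>T\<in>V // reach V ?G. efpoly lam T)"
      using IH True by (simp add: mult.assoc)
    also have "\<dots> = (if creates_cycle ?G C then 0 else \<Prod>T\<in>V // reach V (insert C ?G). efpoly lam T)"
      by (rule efpoly_mult_components[OF fV C(2,3) subG acyc])
    finally show ?thesis
      using IH(2) True ncomp_insert[OF fV C(2,3) subG acyc] compatible_Cons_iff[OF True C(1)]
      unfolding eqG by auto
  qed
qed

lemma compatible_iff_hyperforests_avoiding:
  assumes "F \<subseteq> E" "\<forall>A\<in>E. 2 \<le> card A"
  shows "compatible F Cs \<longleftrightarrow> F \<in> hyperforests_avoiding V E Cs"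
proof
  assume compat: "compatible F Cs"
  hence "\<not> has_cycle F" using has_cycle_mono[of F "F \<union> set Cs"] unfolding compatible_def by auto
  moreover have "\<forall>C\<in>set Cs. C \<notin> F" using compat assms unfolding compatible_def by auto
  ultimately show "F \<in> hyperforests_avoiding V E Cs"
    using compat assms(1) unfolding compatible_def hyperforests_avoiding_def hyperforest_def by auto
next
  assume "F \<in> hyperforests_avoiding V E Cs"
  thus "compatible F Cs" unfolding compatible_def hyperforests_avoiding_def hyperforest_def by auto
qed

lemma eberezin_components:
  assumes "finite V"
  shows "eberezin V ((\<Prod>T\<in>V // reach V G. efpoly lam T) * (\<Prod>i\<in>V. 1 + escal lam * edens i))
    = lam ^ ncomp V G"
proof -
  note partition = components_partition[OF assms, of G]
  have "eberezin (\<Union>(V // reach V G))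
      ((\<Prod>T\<in>V // reach V G. efpoly lam T) * (\<Prod>i\<in>\<Union>(V // reach V G). 1 + escal lam * edens i))
    = lam ^ card (V // reach V G)"
    by (rule eberezin_prod_partition) (use partition in auto)
  thus ?thesis unfolding partition(4) ncomp_def .
qed

lemma eberezin_forest_term:
  fixes V :: "'v::linorder set"
  assumes fV: "finite V" and E: "\<forall>A\<in>E. A \<subseteq> V \<and> 2 \<le> card A" and Cs: "\<forall>C\<in>set Cs. C \<noteq> {} \<and> C \<subseteq> V"
    and dCs: "distinct Cs" and FE: "F \<subseteq> E"
  shows "eberezin V (prod_list (map (efpoly lam) Cs) *
      ((\<Prod>A\<in>F. efpoly lam A) * (\<Prod>i\<in>V. 1 + escal lam * edens i)))
    = (if F \<in> hyperforests_avoiding V E Cs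
       then lam powi (int (ncomp V F) - (\<Sum>C\<leftarrow>Cs. int (card C) - 1)) else 0)"
proof -
  have "F \<subseteq> Pow V" using FE E by auto
  hence fF: "finite F" using fV by (meson finite_Pow_iff finite_subset)
  have edges: "\<forall>A\<in>F \<union> set Cs. A \<subseteq> V \<and> A \<noteq> {}" using FE E Cs by fastforce
  let ?P = "prod_list (map (efpoly lam) Cs)" and ?D = "\<Prod>i\<in>V. 1 + escal lam * edens i"
  have "(\<Prod>A\<in>F. efpoly lam A) = forest_weight lam V F"
    by (rule prod_efpoly_forest_weight[OF fV fF]) (use edges in auto)
  hence "eberezin V (?P * ((\<Prod>A\<in>F. efpoly lam A) * ?D))
      = eberezin V ((?P * forest_weight lam V F) * ?D)"
    by (simp add: mult.assoc)
  moreover note weight = prod_list_efpoly_forest_weight[OF fV dCs edges, of lam]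
  moreover have "compatible F Cs \<longleftrightarrow> F \<in> hyperforests_avoiding V E Cs"
    using FE E by (intro compatible_iff_hyperforests_avoiding) auto
  ultimately show ?thesis
    by (auto simp: eberezin_components[OF fV] eberezin_zero simp flip: power_int_of_nat)
qed

lemma berezin_integrand_eq_eberezin:
  fixes V :: "'v::linorder set"
  assumes "finite V" "\<forall>C\<in>set Cs. finite C" "\<forall>A\<in>E. finite A"
  shows "berezin V (gmul (glistprod (map (fpoly lam) Cs))
           (gexp V (gadd (gsmult lam (gsum (\<lambda>i. gmul (psibar i) (psi i)) V))
                         (gsum (\<lambda>A. gsmult (w A) (fpoly lam A)) E))))
    = eberezin V (prod_list (map (efpoly lam) Cs) *
        eexp (2 * card V) (escal lam * (\<Sum>i\<in>V. edens i) + (\<Sum>A\<in>E. escal (w A) * efpoly lam A)))"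
proof -
  have "glistprod (map (fpoly lam) Cs) = gr_of (prod_list (map (efpoly lam) Cs))"
    using assms(2) by (simp add: glistprod_def gr_of_prod_list fpoly_eq_gr_of_efpoly cong: map_cong)
  moreover have "gsum (\<lambda>A. gsmult (w A) (fpoly lam A)) E = gr_of (\<Sum>A\<in>E. escal (w A) * efpoly lam A)"
    using assms(3) by (simp add: gr_of_sum gr_of_escal_mult fpoly_eq_gr_of_efpoly gsum_def)
  moreover have "gsmult lam (gsum (\<lambda>i. gmul (psibar i) (psi i)) V)
      = gr_of (escal lam * (\<Sum>i\<in>V. edens i))"
    by (simp add: gr_of_escal_mult gr_of_sum gr_of_edens)
  ultimately show ?thesis
    using assms(1) by (simp add: gr_of_add [symmetric] gexp_gr_of gr_of_mult [symmetric]
        berezin_gr_of)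
qed

lemma berezin_integrand_expand:
  fixes V :: "'v::linorder set"
  assumes fV: "finite V" and E: "\<forall>A\<in>E. A \<subseteq> V \<and> 2 \<le> card A" and "\<forall>C\<in>set Cs. C \<subseteq> V"
  shows "berezin V (gmul (glistprod (map (fpoly lam) Cs))
           (gexp V (gadd (gsmult lam (gsum (\<lambda>i. gmul (psibar i) (psi i)) V))
                         (gsum (\<lambda>A. gsmult (w A) (fpoly lam A)) E))))
    = (\<Sum>F\<in>Pow E. (\<Prod>A\<in>F. w A) * eberezin V (prod_list (map (efpoly lam) Cs) *
         ((\<Prod>A\<in>F. efpoly lam A) * (\<Prod>i\<in>V. 1 + escal lam * edens i))))"
proof -
  let ?P = "prod_list (map (efpoly lam) Cs)"
  have fE: "finite E" using E fV by (meson Pow_iff finite_Pow_iff finite_subset subsetI)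
  have fin: "\<forall>C\<in>set Cs. finite C" "\<forall>A\<in>E. finite A"
    using assms fV by (auto intro: finite_subset)
  show ?thesis
    unfolding berezin_integrand_eq_eberezin[OF fV fin] eexp_action_expand[OF fV fE E]
    by (simp add: sum_distrib_left mult.left_commute[of ?P] eberezin_sum eberezin_escal_mult)
qed

theorem corollary5p7:
  fixes V :: "'v::linorder set" and E :: "'v set set" and w :: "'v set \<Rightarrow> complex"
    and lam :: complex and Cs :: "'v set list"
  assumes "hypergraph V E"
    and "\<forall>C\<in>set Cs. C \<noteq> {} \<and> C \<subseteq> V"
    and "\<forall>a<length Cs. \<forall>b<length Cs. a \<noteq> b \<longrightarrow> Cs ! a \<inter> Cs ! b = {}"
  shows "berezin V
           (gmul (glistprod (map (fpoly lam) Cs))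
                 (gexp V (gadd (gsmult lam (gsum (\<lambda>i. gmul (psibar i) (psi i)) V))
                               (gsum (\<lambda>A. gsmult (w A) (fpoly lam A)) E))))
       = (\<Sum>F\<in>hyperforests_avoiding V E Cs.
            (\<Prod>A\<in>F. w A) * lam powi (int (ncomp V F) - (\<Sum>C\<leftarrow>Cs. int (card C) - 1)))"
proof -
  have fV: "finite V" and E: "\<forall>A\<in>E. A \<subseteq> V \<and> 2 \<le> card A"
    using assms(1) by (auto simp: hypergraph_def)
  have fE: "finite E" using E fV by (meson Pow_iff finite_Pow_iff finite_subset subsetI)
  have dCs: "distinct Cs"
    unfolding distinct_conv_nth using assms(2,3) by (metis Int_absorb nth_mem)
  let ?HA = "hyperforests_avoiding V E Cs"
  let ?term = "\<lambda>F. (\<Prod>A\<in>F. w A) * lam powi (int (ncomp V F) - (\<Sum>C\<leftarrow>Cs. int (card C) - 1))"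
  have "?HA \<subseteq> Pow E" by (auto simp: hyperforests_avoiding_def)
  have "(\<Sum>F\<in>Pow E. (\<Prod>A\<in>F. w A) * eberezin V (prod_list (map (efpoly lam) Cs) *
          ((\<Prod>A\<in>F. efpoly lam A) * (\<Prod>i\<in>V. 1 + escal lam * edens i))))
      = (\<Sum>F\<in>Pow E. if F \<in> ?HA then ?term F else 0)"
    using eberezin_forest_term[OF fV E assms(2) dCs] by (intro sum.cong) auto
  also have "\<dots> = (\<Sum>F\<in>?HA. ?term F)"
    using \<open>?HA \<subseteq> Pow E\<close> fE by (simp add: sum.If_cases Int_absorb1)
  finally show ?thesis using assms(2) by (simp add: berezin_integrand_expand[OF fV E])
qed

end
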